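(* Let $(H,\sigma)$, $X$, $A$, $H_{X,A}$, $D=D(H_{X,A}^{\rm cop},X)$ and the Hopf projection $\pi:D\to H_{X,A}^{\rm cop}$, $\pi(l_xr_a\otimes y)=l_xr_al_{S^{-1}(y)}$, be as in the context, and let $B=\{d\in D\mid d_1\otimes\pi(d_2)=d\otimes 1\}$. Then: (i) $B=\{l_{S^{-2}(x_2)}\otimes x_1\mid x\in X\}$, and $\theta:X\to B$, $\theta(x)=l_{S^{-2}(x_2)}\otimes x_1$, is a linear isomorphism; (ii) transporting via $\theta$ the left $H_{X,A}^{\rm cop}$-action $\varphi\triangleright d=i(\varphi_{(1)})\,d\,i(S_{H^{\rm cop}_{X,A}}(\varphi_{(2)}))$ and coaction $d\mapsto\pi(d_1)\otimes d_2$ of $B$, $X$ becomes a left Yetter–Drinfeld module over $H_{X,A}^{\rm cop}$ with $$l_xr_a\triangleright y=\langle l_xr_a,S^{-1}(y_1)S^{-2}(y_3)\rangle\,y_2,\qquad \lambda(y)=l_{S^{-1}(y_1)S^{-2}(y_3)}\otimes y_2 .$$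
   Context: Sweedler notation. $(H,\sigma)$ is a CQT Hopf algebra: $\sigma:H\otimes H\to k$ convolution invertible with $\sigma(hh',g)=\sigma(h,g_1)\sigma(h',g_2)$, $\sigma(g,hh')=\sigma(g_2,h)\sigma(g_1,h')$, $\sigma(1,h)=\sigma(h,1)=\varepsilon(h)$, $\sigma(h_1,h'_1)h_2h'_2=h'_1h_1\sigma(h_2,h'_2)$; antipode $S$ bijective. $X,A\subseteq H$ sub-Hopf algebras; in $H^0$, $l_x=\sigma(-,x)$, $r_a=\sigma(a,-)$, $H_{X,A}=\{\sum l_xr_a\}$ is the sub-Hopf algebra $H_{l_X}H_{r_A}$ of $H^0$ ($l_{xy}=l_yl_x$, $\Delta(l_x)=l_{x_1}\otimes l_{x_2}$, $S(l_x)=l_{S^{-1}(x)}$, $r_{ab}=r_ar_b$, $\Delta(r_a)=r_{a_2}\otimes r_{a_1}$, $S(r_a)=r_{S^{-1}(a)}$). $\langle\varphi,y\rangle=\varphi(y)$ is the evaluation pairing $H_{X,A}\otimes X\to k$. $D=D(H_{X,A}^{\rm cop},X)$ is the Hopf algebra on $H_{X,A}\otimes X$ with unit $\varepsilon\otimes1$, multiplication $(m\otimes x)(n\otimes y)=\langle n_3,x_1\rangle\langle S^{-1}(n_1),x_3\rangle mn_2\otimes x_2y$, comultiplication $\Delta(m\otimes x)=(m_2\otimes x_1)\otimes(m_1\otimes x_2)$ (subscripts in $H^0$, $X$); $i(\varphi)=\varphi\otimes1$. In $\varphi_{(1)}\otimes\varphi_{(2)}$ the comultiplication of $H_{X,A}^{\rm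 cop}$ is meant, and $S_{H^{\rm cop}_{X,A}}$ is the inverse of the antipode of $H^0$. *)

theory Defs
  imports Main "HOL.Vector_Spaces"
begin

text \<open>
The ground field is a type 'k of class field; the
Hopf algebra H is a type 'h of class ring_1 (its ring structure is the algebra
multiplication and unit) together with a scalar multiplication sc.
Tensors are finite formal sums of pure tensors, given as lists; two such lists
represent the same element of the tensor product iff all products of linear
functionals agree on them (the tensor product of vector spaces is separated by
such functionals).  Elements of the
finite dual H^0 are functions 'h => 'k; a tensor with factors in H^0 is
identified with its image under the canonical (injective) evaluation map,
i.e. the H^0-factors are evaluated at points of H.
\<close>

definition lin_fun :: "('k::field \<Rightarrow> 'h::ab_group_add \<Rightarrow> 'h) \<Rightarrow> ('h \<Rightarrow> 'k) \<Rightarrow> bool" where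
  "lin_fun sc f \<longleftrightarrow> (\<forall>a b. f (a + b) = f a + f b) \<and> (\<forall>c a. f (sc c a) = c * f a)"

definition teq2 :: "('k::field \<Rightarrow> 'h::ab_group_add \<Rightarrow> 'h) \<Rightarrow> ('h \<times> 'h) list \<Rightarrow> ('h \<times> 'h) list \<Rightarrow> bool" where
  "teq2 sc L M \<longleftrightarrow> (\<forall>f g. lin_fun sc f \<and> lin_fun sc g \<longrightarrow>
      (\<Sum>(a,b)\<leftarrow>L. f a * g b) = (\<Sum>(a,b)\<leftarrow>M. f a * g b))"

definition teq3 :: "('k::field \<Rightarrow> 'h::ab_group_add \<Rightarrow> 'h) \<Rightarrow> ('h \<times> 'h \<times> 'h) list \<Rightarrow> ('h \<times> 'h \<times> 'h) list \<Rightarrow> bool" where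
  "teq3 sc L M \<longleftrightarrow> (\<forall>f g k. lin_fun sc f \<and> lin_fun sc g \<and> lin_fun sc k \<longrightarrow>
      (\<Sum>(a,b,c)\<leftarrow>L. f a * g b * k c) = (\<Sum>(a,b,c)\<leftarrow>M. f a * g b * k c))"

text \<open>(\<Delta> \<otimes> id)\<Delta> and (id \<otimes> \<Delta>)\<Delta>; the former is used as h_1 \<otimes> h_2 \<otimes> h_3.\<close>
definition delta2 :: "('h \<Rightarrow> ('h \<times> 'h) list) \<Rightarrow> 'h \<Rightarrow> ('h \<times> 'h \<times> 'h) list" where
  "delta2 \<Delta> h = concat (map (\<lambda>(u,c). map (\<lambda>(a,b). (a,b,c)) (\<Delta> u)) (\<Delta> h))"

definition delta2' :: "('h \<Rightarrow> ('h \<times> 'h) list) \<Rightarrow> 'h \<Rightarrow> ('h \<times> 'h \<times> 'h) list" where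
  "delta2' \<Delta> h = concat (map (\<lambda>(a,u). map (\<lambda>(b,c). (a,b,c)) (\<Delta> u)) (\<Delta> h))"

definition hopf_algebra :: "('k::field \<Rightarrow> 'h::ring_1 \<Rightarrow> 'h) \<Rightarrow> ('h \<Rightarrow> ('h \<times> 'h) list) \<Rightarrow> ('h \<Rightarrow> 'k) \<Rightarrow> ('h \<Rightarrow> 'h) \<Rightarrow> bool" where
  "hopf_algebra sc \<Delta> \<epsilon> S \<longleftrightarrow>
     vector_space sc
   \<and> (\<forall>c a b. sc c (a * b) = sc c a * b \<and> sc c (a * b) = a * sc c b)
   \<and> (\<forall>a b. teq2 sc (\<Delta> (a + b)) (\<Delta> a @ \<Delta> b))
   \<and> (\<forall>c a. teq2 sc (\<Delta> (sc c a)) (map (\<lambda>(x,y). (sc c x, y)) (\<Delta> a)))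
   \<and> (\<forall>h. teq3 sc (delta2 \<Delta> h) (delta2' \<Delta> h))
   \<and> lin_fun sc \<epsilon>
   \<and> (\<forall>h. (\<Sum>(a,b)\<leftarrow>\<Delta> h. sc (\<epsilon> a) b) = h)
   \<and> (\<forall>h. (\<Sum>(a,b)\<leftarrow>\<Delta> h. sc (\<epsilon> b) a) = h)
   \<and> (\<forall>a b. teq2 sc (\<Delta> (a * b)) (concat (map (\<lambda>(x,y). map (\<lambda>(u,v). (x * u, y * v)) (\<Delta> b)) (\<Delta> a))))
   \<and> teq2 sc (\<Delta> 1) [(1, 1)]
   \<and> (\<forall>a b. \<epsilon> (a * b) = \<epsilon> a * \<epsilon> b) \<and> \<epsilon> 1 = 1
   \<and> (\<forall>a b. S (a + b) = S a + S b) \<and> (\<forall>c a. S (sc c a) = sc c (S a))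
   \<and> (\<forall>h. (\<Sum>(a,b)\<leftarrow>\<Delta> h. S a * b) = sc (\<epsilon> h) 1)
   \<and> (\<forall>h. (\<Sum>(a,b)\<leftarrow>\<Delta> h. a * S b) = sc (\<epsilon> h) 1)"

definition conv2 :: "('h \<Rightarrow> ('h \<times> 'h) list) \<Rightarrow> ('h \<Rightarrow> 'h \<Rightarrow> 'k::field) \<Rightarrow> ('h \<Rightarrow> 'h \<Rightarrow> 'k) \<Rightarrow> 'h \<Rightarrow> 'h \<Rightarrow> 'k" where
  "conv2 \<Delta> s t h g = (\<Sum>(h1,h2)\<leftarrow>\<Delta> h. \<Sum>(g1,g2)\<leftarrow>\<Delta> g. s h1 g1 * t h2 g2)"

definition bilin :: "('k::field \<Rightarrow> 'h::ab_group_add \<Rightarrow> 'h) \<Rightarrow> ('h \<Rightarrow> 'h \<Rightarrow> 'k) \<Rightarrow> bool" where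
  "bilin sc s \<longleftrightarrow> (\<forall>g. lin_fun sc (\<lambda>h. s h g)) \<and> (\<forall>h. lin_fun sc (s h))"

definition cqt :: "('k::field \<Rightarrow> 'h::ring_1 \<Rightarrow> 'h) \<Rightarrow> ('h \<Rightarrow> ('h \<times> 'h) list) \<Rightarrow> ('h \<Rightarrow> 'k) \<Rightarrow> ('h \<Rightarrow> 'h \<Rightarrow> 'k) \<Rightarrow> bool" where
  "cqt sc \<Delta> \<epsilon> \<sigma> \<longleftrightarrow>
     bilin sc \<sigma>
   \<and> (\<exists>\<sigma>'. bilin sc \<sigma>' \<and> (\<forall>h g. conv2 \<Delta> \<sigma> \<sigma>' h g = \<epsilon> h * \<epsilon> g \<and> conv2 \<Delta> \<sigma>' \<sigma> h g = \<epsilon> h * \<epsilon> g))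
   \<and> (\<forall>h h' g. \<sigma> (h * h') g = (\<Sum>(g1,g2)\<leftarrow>\<Delta> g. \<sigma> h g1 * \<sigma> h' g2))
   \<and> (\<forall>g h h'. \<sigma> g (h * h') = (\<Sum>(g1,g2)\<leftarrow>\<Delta> g. \<sigma> g2 h * \<sigma> g1 h'))
   \<and> (\<forall>h. \<sigma> 1 h = \<epsilon> h \<and> \<sigma> h 1 = \<epsilon> h)
   \<and> (\<forall>h h'. (\<Sum>(h1,h2)\<leftarrow>\<Delta> h. \<Sum>(k1,k2)\<leftarrow>\<Delta> h'. sc (\<sigma> h1 k1) (h2 * k2))
           = (\<Sum>(h1,h2)\<leftarrow>\<Delta> h. \<Sum>(k1,k2)\<leftarrow>\<Delta> h'. sc (\<sigma> h2 k2) (k1 * h1)))"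

definition sub_hopf :: "('k::field \<Rightarrow> 'h::ring_1 \<Rightarrow> 'h) \<Rightarrow> ('h \<Rightarrow> ('h \<times> 'h) list) \<Rightarrow> ('h \<Rightarrow> 'h) \<Rightarrow> 'h set \<Rightarrow> bool" where
  "sub_hopf sc \<Delta> S X \<longleftrightarrow>
     0 \<in> X \<and> (\<forall>a\<in>X. \<forall>b\<in>X. a + b \<in> X) \<and> (\<forall>c. \<forall>a\<in>X. sc c a \<in> X)
   \<and> 1 \<in> X \<and> (\<forall>a\<in>X. \<forall>b\<in>X. a * b \<in> X)
   \<and> (\<forall>x\<in>X. \<exists>L. set L \<subseteq> X \<times> X \<and> teq2 sc L (\<Delta> x))
   \<and> S ` X = X"

definition conv :: "('h \<Rightarrow> ('h \<times> 'h) list) \<Rightarrow> ('h \<Rightarrow> 'k::field) \<Rightarrow> ('h \<Rightarrow> 'k) \<Rightarrow> 'h \<Rightarrow> 'k" where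
  "conv \<Delta> \<phi> \<psi> = (\<lambda>h. \<Sum>(a,b)\<leftarrow>\<Delta> h. \<phi> a * \<psi> b)"

definition lmap :: "('h \<Rightarrow> 'h \<Rightarrow> 'k) \<Rightarrow> 'h \<Rightarrow> 'h \<Rightarrow> 'k" where
  "lmap \<sigma> x = (\<lambda>h. \<sigma> h x)"

definition rmap :: "('h \<Rightarrow> 'h \<Rightarrow> 'k) \<Rightarrow> 'h \<Rightarrow> 'h \<Rightarrow> 'k" where
  "rmap \<sigma> a = (\<lambda>h. \<sigma> a h)"

definition HXA :: "('h \<Rightarrow> ('h \<times> 'h) list) \<Rightarrow> ('h \<Rightarrow> 'h \<Rightarrow> 'k::field) \<Rightarrow> 'h set \<Rightarrow> 'h set \<Rightarrow> ('h \<Rightarrow> 'k) set" where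
  "HXA \<Delta> \<sigma> X A = {\<phi>. \<exists>L. (\<forall>(c,x,a)\<in>set L. x \<in> X \<and> a \<in> A) \<and>
        \<phi> = (\<lambda>h. \<Sum>(c,x,a)\<leftarrow>L. c * conv \<Delta> (lmap \<sigma> x) (rmap \<sigma> a) h)}"

text \<open>The double D = H_{X,A} \<otimes> X.  A formal sum \<Sum> m_i \<otimes> x_i (list of pairs) is identified
  with the map h \<mapsto> \<Sum> m_i(h) x_i (canonical injection H^0 \<otimes> X \<rightarrow> Hom(H,X)).\<close>
definition evD :: "('k::field \<Rightarrow> 'h::ring_1 \<Rightarrow> 'h) \<Rightarrow> (('h \<Rightarrow> 'k) \<times> 'h) list \<Rightarrow> 'h \<Rightarrow> 'h" where
  "evD sc L = (\<lambda>h. \<Sum>(m,y)\<leftarrow>L. sc (m h) y)"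

definition Dvalid :: "('h \<Rightarrow> 'k) set \<Rightarrow> 'h set \<Rightarrow> (('h \<Rightarrow> 'k) \<times> 'h) list \<Rightarrow> bool" where
  "Dvalid K X L \<longleftrightarrow> (\<forall>(m,y)\<in>set L. m \<in> K \<and> y \<in> X)"

definition Dset :: "('k::field \<Rightarrow> 'h::ring_1 \<Rightarrow> 'h) \<Rightarrow> ('h \<Rightarrow> 'k) set \<Rightarrow> 'h set \<Rightarrow> ('h \<Rightarrow> 'h) set" where
  "Dset sc K X = {evD sc L | L. Dvalid K X L}"

text \<open>Multiplication of D on formal sums:
  (m \<otimes> x)(n \<otimes> y) = \<langle>n_3,x_1\<rangle>\<langle>S^{-1}(n_1),x_3\<rangle> m n_2 \<otimes> x_2 y, where (Sweedler in H^0)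
  \<langle>n_3,x_1\<rangle>\<langle>S^{-1}(n_1),x_3\<rangle> n_2 is the functional b \<mapsto> n(S^{-1}(x_3) b x_1).\<close>
definition multD :: "('h::ring_1 \<Rightarrow> ('h \<times> 'h) list) \<Rightarrow> ('h \<Rightarrow> 'h) \<Rightarrow> (('h \<Rightarrow> 'k::field) \<times> 'h) list
     \<Rightarrow> (('h \<Rightarrow> 'k) \<times> 'h) list \<Rightarrow> (('h \<Rightarrow> 'k) \<times> 'h) list" where
  "multD \<Delta> Sinv L M = concat (map (\<lambda>(m,x). concat (map (\<lambda>(n,y).
      map (\<lambda>(x1,x2,x3). (conv \<Delta> m (\<lambda>b. n (Sinv x3 * b * x1)), x2 * y)) (delta2 \<Delta> x)) M)) L)"

definition iD :: "('h::ring_1 \<Rightarrow> 'k) \<Rightarrow> (('h \<Rightarrow> 'k) \<times> 'h) list" where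
  "iD \<phi> = [(\<phi>, 1)]"

text \<open>For d = \<Sum> m \<otimes> x: the element d_1 \<otimes> \<pi>(d_2) of D \<otimes> H_{X,A}, with
  \<Delta>(m \<otimes> x) = (m_2 \<otimes> x_1) \<otimes> (m_1 \<otimes> x_2) and \<pi>(m \<otimes> y) = m l_{S^{-1}(y)}, evaluated with the
  first H^0-factor at h and the last at h':  \<Sum> m(h'_1 h) \<sigma>(h'_2, S^{-1}(x_2)) x_1.\<close>
definition B_lhs :: "('k::field \<Rightarrow> 'h::ring_1 \<Rightarrow> 'h) \<Rightarrow> ('h \<Rightarrow> ('h \<times> 'h) list) \<Rightarrow> ('h \<Rightarrow> 'h \<Rightarrow> 'k) \<Rightarrow> ('h \<Rightarrow> 'h)
     \<Rightarrow> (('h \<Rightarrow> 'k) \<times> 'h) list \<Rightarrow> 'h \<Rightarrow> 'h \<Rightarrow> 'h" where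
  "B_lhs sc \<Delta> \<sigma> Sinv L h h' = (\<Sum>(m,x)\<leftarrow>L. \<Sum>(x1,x2)\<leftarrow>\<Delta> x. \<Sum>(a,b)\<leftarrow>\<Delta> h'.
       sc (m (a * h) * \<sigma> b (Sinv x2)) x1)"

text \<open>d \<otimes> 1 (the unit of H_{X,A} is \<epsilon>), evaluated in the same way.\<close>
definition B_rhs :: "('k::field \<Rightarrow> 'h::ring_1 \<Rightarrow> 'h) \<Rightarrow> ('h \<Rightarrow> 'k) \<Rightarrow> (('h \<Rightarrow> 'k) \<times> 'h) list \<Rightarrow> 'h \<Rightarrow> 'h \<Rightarrow> 'h" where
  "B_rhs sc \<epsilon> L h h' = (\<Sum>(m,x)\<leftarrow>L. sc (m h * \<epsilon> h') x)"

definition Bset :: "('k::field \<Rightarrow> 'h::ring_1 \<Rightarrow> 'h) \<Rightarrow> ('h \<Rightarrow> ('h \<times> 'h) list) \<Rightarrow> ('h \<Rightarrow> 'k) \<Rightarrow> ('h \<Rightarrow> 'h)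
     \<Rightarrow> ('h \<Rightarrow> 'h \<Rightarrow> 'k) \<Rightarrow> 'h set \<Rightarrow> 'h set \<Rightarrow> ('h \<Rightarrow> 'h) set" where
  "Bset sc \<Delta> \<epsilon> S \<sigma> X A = {evD sc L | L. Dvalid (HXA \<Delta> \<sigma> X A) X L \<and>
       (\<forall>h h'. B_lhs sc \<Delta> \<sigma> (inv S) L h h' = B_rhs sc \<epsilon> L h h')}"

definition thetaL :: "('h \<Rightarrow> ('h \<times> 'h) list) \<Rightarrow> ('h \<Rightarrow> 'h \<Rightarrow> 'k) \<Rightarrow> ('h \<Rightarrow> 'h) \<Rightarrow> 'h \<Rightarrow> (('h \<Rightarrow> 'k) \<times> 'h) list" where
  "thetaL \<Delta> \<sigma> Sinv x = map (\<lambda>(x1,x2). (lmap \<sigma> (Sinv (Sinv x2)), x1)) (\<Delta> x)"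

definition theta :: "('k::field \<Rightarrow> 'h::ring_1 \<Rightarrow> 'h) \<Rightarrow> ('h \<Rightarrow> ('h \<times> 'h) list) \<Rightarrow> ('h \<Rightarrow> 'h \<Rightarrow> 'k) \<Rightarrow> ('h \<Rightarrow> 'h) \<Rightarrow> 'h \<Rightarrow> 'h \<Rightarrow> 'h" where
  "theta sc \<Delta> \<sigma> S x = evD sc (thetaL \<Delta> \<sigma> (inv S) x)"

text \<open>Action of \<phi> = l_x r_a on d \<in> B:  i(\<phi>_(1)) d i(S_{cop}(\<phi>_(2))), where in H_{X,A}^cop
  \<phi>_(1) \<otimes> \<phi>_(2) = l_{x_2} r_{a_1} \<otimes> l_{x_1} r_{a_2} (the flip of
  \<Delta>(l_x r_a) = l_{x_1} r_{a_2} \<otimes> l_{x_2} r_{a_1}) and S_{cop}(\<psi>) = \<psi> \<circ> S^{-1}.\<close>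
definition actB :: "('h::ring_1 \<Rightarrow> ('h \<times> 'h) list) \<Rightarrow> ('h \<Rightarrow> 'h \<Rightarrow> 'k::field) \<Rightarrow> ('h \<Rightarrow> 'h) \<Rightarrow> 'h \<Rightarrow> 'h
     \<Rightarrow> (('h \<Rightarrow> 'k) \<times> 'h) list \<Rightarrow> (('h \<Rightarrow> 'k) \<times> 'h) list" where
  "actB \<Delta> \<sigma> S x a L = concat (map (\<lambda>((x1,x2),(a1,a2)).
      multD \<Delta> (inv S) (multD \<Delta> (inv S) (iD (conv \<Delta> (lmap \<sigma> x2) (rmap \<sigma> a1))) L)
            (iD (conv \<Delta> (lmap \<sigma> x1) (rmap \<sigma> a2) \<circ> inv S)))
      (List.product (\<Delta> x) (\<Delta> a)))"

text \<open>Coaction of B, d \<mapsto> \<pi>(d_1) \<otimes> d_2 \<in> H_{X,A} \<otimes> D, evaluated with the H_{X,A}-factor at h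
  and the D-factor at h':  \<Sum> m(h' h_1) \<sigma>(h_2, S^{-1}(x_1)) x_2.\<close>
definition coactB :: "('k::field \<Rightarrow> 'h::ring_1 \<Rightarrow> 'h) \<Rightarrow> ('h \<Rightarrow> ('h \<times> 'h) list) \<Rightarrow> ('h \<Rightarrow> 'h \<Rightarrow> 'k) \<Rightarrow> ('h \<Rightarrow> 'h)
     \<Rightarrow> (('h \<Rightarrow> 'k) \<times> 'h) list \<Rightarrow> 'h \<Rightarrow> 'h \<Rightarrow> 'h" where
  "coactB sc \<Delta> \<sigma> S L h h' = (\<Sum>(m,x)\<leftarrow>L. \<Sum>(x1,x2)\<leftarrow>\<Delta> x. \<Sum>(h1,h2)\<leftarrow>\<Delta> h.
       sc (m (h' * h1) * \<sigma> h2 (inv S x1)) x2)"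

definition actX :: "('k::field \<Rightarrow> 'h::ring_1 \<Rightarrow> 'h) \<Rightarrow> ('h \<Rightarrow> ('h \<times> 'h) list) \<Rightarrow> ('h \<Rightarrow> 'h) \<Rightarrow> ('h \<Rightarrow> 'k) \<Rightarrow> 'h \<Rightarrow> 'h" where
  "actX sc \<Delta> S \<phi> y = (\<Sum>(y1,y2,y3)\<leftarrow>delta2 \<Delta> y. sc (\<phi> (inv S y1 * inv S (inv S y3))) y2)"

definition coactX :: "('k::field \<Rightarrow> 'h::ring_1 \<Rightarrow> 'h) \<Rightarrow> ('h \<Rightarrow> ('h \<times> 'h) list) \<Rightarrow> ('h \<Rightarrow> 'h \<Rightarrow> 'k) \<Rightarrow> ('h \<Rightarrow> 'h) \<Rightarrow> 'h \<Rightarrow> 'h \<Rightarrow> 'h" where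
  "coactX sc \<Delta> \<sigma> S y = (\<lambda>h. \<Sum>(y1,y2,y3)\<leftarrow>delta2 \<Delta> y. sc (\<sigma> h (inv S y1 * inv S (inv S y3))) y2)"

text \<open>Left Yetter-Drinfeld module over H_{X,A}^cop (product = convolution, unit \<epsilon>,
  \<Delta>^cop(\<phi>)(a \<otimes> b) = \<phi>(b a), counit \<phi> \<mapsto> \<phi>(1)), with all H_{X,A}-factors evaluated:
  module axioms; comodule axioms (\<Delta>^cop \<otimes> id)\<lambda> = (id \<otimes> \<lambda>)\<lambda>, (\<epsilon> \<otimes> id)\<lambda> = id;
  compatibility \<phi>_(1) y_{-1} \<otimes> \<phi>_(2) \<triangleright> y_0 = (\<phi>_(1) \<triangleright> y)_{-1} \<phi>_(2) \<otimes> (\<phi>_(1) \<triangleright> y)_0.\<close>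
definition left_YD :: "('k::field \<Rightarrow> 'h::ring_1 \<Rightarrow> 'h) \<Rightarrow> ('h \<Rightarrow> ('h \<times> 'h) list) \<Rightarrow> ('h \<Rightarrow> 'k)
     \<Rightarrow> ('h \<Rightarrow> 'k) set \<Rightarrow> 'h set \<Rightarrow> (('h \<Rightarrow> 'k) \<Rightarrow> 'h \<Rightarrow> 'h) \<Rightarrow> ('h \<Rightarrow> 'h \<Rightarrow> 'h) \<Rightarrow> bool" where
  "left_YD sc \<Delta> \<epsilon> K X act coact \<longleftrightarrow>
     (\<forall>\<phi>\<in>K. \<forall>y\<in>X. act \<phi> y \<in> X)
   \<and> (\<forall>\<phi>\<in>K. \<forall>y\<in>X. \<forall>z\<in>X. act \<phi> (y + z) = act \<phi> y + act \<phi> z)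
   \<and> (\<forall>\<phi>\<in>K. \<forall>c. \<forall>y\<in>X. act \<phi> (sc c y) = sc c (act \<phi> y))
   \<and> (\<forall>\<phi>\<in>K. \<forall>\<psi>\<in>K. \<forall>y\<in>X. act (\<lambda>h. \<phi> h + \<psi> h) y = act \<phi> y + act \<psi> y)
   \<and> (\<forall>\<phi>\<in>K. \<forall>c. \<forall>y\<in>X. act (\<lambda>h. c * \<phi> h) y = sc c (act \<phi> y))
   \<and> (\<forall>y\<in>X. act \<epsilon> y = y)
   \<and> (\<forall>\<phi>\<in>K. \<forall>\<psi>\<in>K. \<forall>y\<in>X. act (conv \<Delta> \<phi> \<psi>) y = act \<phi> (act \<psi> y))
   \<and> (\<forall>y\<in>X. coact y \<in> Dset sc K X)
   \<and> (\<forall>y\<in>X. \<forall>z\<in>X. coact (y + z) = (\<lambda>h. coact y h + coact z h))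
   \<and> (\<forall>c. \<forall>y\<in>X. coact (sc c y) = (\<lambda>h. sc c (coact y h)))
   \<and> (\<forall>y\<in>X. \<forall>h h'. coact (coact y h) h' = coact y (h' * h))
   \<and> (\<forall>y\<in>X. coact y 1 = y)
   \<and> (\<forall>\<phi>\<in>K. \<forall>y\<in>X. \<forall>h.
        (\<Sum>(h1,h2)\<leftarrow>\<Delta> h. act (\<lambda>w. \<phi> (w * h1)) (coact y h2))
      = (\<Sum>(h1,h2)\<leftarrow>\<Delta> h. coact (act (\<lambda>w. \<phi> (h2 * w)) y) h1))"

end

theory Submission
  imports Defs
begin

(*
  Linear functionals separate the points of a vector space, so every identity is checked after
  applying an arbitrary functional.  What remains are iterated Sweedler sums of scalars,
  multilinear in their legs, which coassociativity, the counit and antipode axioms and the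
  axioms of sigma rewrite.

  (i) Evaluating theta(x) at 1 returns x, so theta is injective.  theta(x) lies in B because in
  d_1 (x) pi(d_2) the factor sigma(h', S^-1(x_2) S^-2(x_3)) collapses to epsilon(h') by the
  antipode axiom.  Conversely, evaluating the defining equation of B at 1 in the first factor
  and pushing the second factor through theta shows d = theta(d(1)) for every d in B.

  (ii) Multiplying theta(y) on both sides by i(l_x r_a) and using
  Delta(l_x r_a) = l_x1 r_a2 (x) l_x2 r_a1 together with the braiding axiom gives
  theta(l_x r_a |> y).  On X the coaction at h is the action of sigma(h, -).  Since the
  coproduct of S^-1(y_1) S^-2(y_3) is again of this twisted form, the action is
  multiplicative, which yields both the module and the comodule axioms, and the
  Yetter-Drinfeld condition reduces to the braiding axiom.
*)

lemma vector_space_field_mult: "vector_space ((*) :: 'k::field \<Rightarrow> 'k \<Rightarrow> 'k)"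
  by unfold_locales (simp_all add: algebra_simps)

lemma sum_list_sum_commute:
  "(\<Sum>x\<leftarrow>L. \<Sum>e\<in>B. G x e) = (\<Sum>e\<in>B. \<Sum>x\<leftarrow>L. G x e)"
  by (induction L) (auto simp: sum.distrib)

lemma sum_list_map_commute:
  fixes G :: "'a \<Rightarrow> 'b \<Rightarrow> 'c::comm_monoid_add"
  shows "(\<Sum>x\<leftarrow>L. \<Sum>y\<leftarrow>M. G x y) = (\<Sum>y\<leftarrow>M. \<Sum>x\<leftarrow>L. G x y)"
proof (induction L)
  case Nil
  then show ?case by (induction M) auto
next
  case (Cons a L)
  then show ?case by (simp add: sum_list_addf)
qed

lemma sum_list_map_concat: "sum_list (map f (concat xs)) = (\<Sum>x\<leftarrow>xs. sum_list (map f x))"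
  by (induction xs) auto

section \<open>Linear functionals\<close>

definition lin_endo :: "('k::field \<Rightarrow> 'h::ab_group_add \<Rightarrow> 'h) \<Rightarrow> ('h \<Rightarrow> 'h) \<Rightarrow> bool" where
  "lin_endo sc f \<longleftrightarrow> (\<forall>a b. f (a + b) = f a + f b) \<and> (\<forall>c a. f (sc c a) = sc c (f a))"

definition trilin :: "('k::field \<Rightarrow> 'h::ab_group_add \<Rightarrow> 'h) \<Rightarrow> ('h \<Rightarrow> 'h \<Rightarrow> 'h \<Rightarrow> 'k) \<Rightarrow> bool" where
  "trilin sc F \<longleftrightarrow> (\<forall>b c. lin_fun sc (\<lambda>a. F a b c)) \<and> (\<forall>a c. lin_fun sc (\<lambda>b. F a b c))
     \<and> (\<forall>a b. lin_fun sc (\<lambda>c. F a b c))"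

definition quadrilin :: "('k::field \<Rightarrow> 'h::ab_group_add \<Rightarrow> 'h) \<Rightarrow> ('h \<Rightarrow> 'h \<Rightarrow> 'h \<Rightarrow> 'h \<Rightarrow> 'k) \<Rightarrow> bool" where
  "quadrilin sc F \<longleftrightarrow> (\<forall>b c d. lin_fun sc (\<lambda>a. F a b c d)) \<and> (\<forall>a c d. lin_fun sc (\<lambda>b. F a b c d))
     \<and> (\<forall>a b d. lin_fun sc (\<lambda>c. F a b c d)) \<and> (\<forall>a b c. lin_fun sc (\<lambda>d. F a b c d))"

definition quintilin :: "('k::field \<Rightarrow> 'h::ab_group_add \<Rightarrow> 'h) \<Rightarrow> ('h \<Rightarrow> 'h \<Rightarrow> 'h \<Rightarrow> 'h \<Rightarrow> 'h \<Rightarrow> 'k) \<Rightarrow> bool" where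
  "quintilin sc F \<longleftrightarrow> (\<forall>b c d e. lin_fun sc (\<lambda>a. F a b c d e)) \<and> (\<forall>a c d e. lin_fun sc (\<lambda>b. F a b c d e))
     \<and> (\<forall>a b d e. lin_fun sc (\<lambda>c. F a b c d e)) \<and> (\<forall>a b c e. lin_fun sc (\<lambda>d. F a b c d e))
     \<and> (\<forall>a b c d. lin_fun sc (\<lambda>e. F a b c d e))"

lemma bilinI: "(\<And>b. lin_fun sc (\<lambda>a. F a b)) \<Longrightarrow> (\<And>a. lin_fun sc (\<lambda>b. F a b)) \<Longrightarrow> bilin sc F"
  by (simp add: bilin_def)
lemma bilinD: "bilin sc F \<Longrightarrow> lin_fun sc (\<lambda>a. F a b)" "bilin sc F \<Longrightarrow> lin_fun sc (\<lambda>b. F a b)"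
  by (simp_all add: bilin_def)

lemma trilinI:
  "(\<And>b c. lin_fun sc (\<lambda>a. F a b c)) \<Longrightarrow> (\<And>a c. lin_fun sc (\<lambda>b. F a b c))
   \<Longrightarrow> (\<And>a b. lin_fun sc (\<lambda>c. F a b c)) \<Longrightarrow> trilin sc F"
  by (simp add: trilin_def)
lemma trilinD: "trilin sc F \<Longrightarrow> lin_fun sc (\<lambda>a. F a b c)" "trilin sc F \<Longrightarrow> lin_fun sc (\<lambda>b. F a b c)"
  "trilin sc F \<Longrightarrow> lin_fun sc (\<lambda>c. F a b c)"
  by (simp_all add: trilin_def)

lemma quadrilinI:
  "(\<And>b c d. lin_fun sc (\<lambda>a. F a b c d)) \<Longrightarrow> (\<And>a c d. lin_fun sc (\<lambda>b. F a b c d))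
   \<Longrightarrow> (\<And>a b d. lin_fun sc (\<lambda>c. F a b c d)) \<Longrightarrow> (\<And>a b c. lin_fun sc (\<lambda>d. F a b c d))
   \<Longrightarrow> quadrilin sc F"
  by (simp add: quadrilin_def)
lemma quadrilinD:
  "quadrilin sc F \<Longrightarrow> lin_fun sc (\<lambda>a. F a b c d)" "quadrilin sc F \<Longrightarrow> lin_fun sc (\<lambda>b. F a b c d)"
  "quadrilin sc F \<Longrightarrow> lin_fun sc (\<lambda>c. F a b c d)" "quadrilin sc F \<Longrightarrow> lin_fun sc (\<lambda>d. F a b c d)"
  by (simp_all add: quadrilin_def)

lemma quintilinI:
  "(\<And>b c d e. lin_fun sc (\<lambda>a. F a b c d e)) \<Longrightarrow> (\<And>a c d e. lin_fun sc (\<lambda>b. F a b c d e))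
   \<Longrightarrow> (\<And>a b d e. lin_fun sc (\<lambda>c. F a b c d e)) \<Longrightarrow> (\<And>a b c e. lin_fun sc (\<lambda>d. F a b c d e))
   \<Longrightarrow> (\<And>a b c d. lin_fun sc (\<lambda>e. F a b c d e)) \<Longrightarrow> quintilin sc F"
  by (simp add: quintilin_def)
lemma quintilinD:
  "quintilin sc F \<Longrightarrow> lin_fun sc (\<lambda>a. F a b c d e)" "quintilin sc F \<Longrightarrow> lin_fun sc (\<lambda>b. F a b c d e)"
  "quintilin sc F \<Longrightarrow> lin_fun sc (\<lambda>c. F a b c d e)" "quintilin sc F \<Longrightarrow> lin_fun sc (\<lambda>d. F a b c d e)"
  "quintilin sc F \<Longrightarrow> lin_fun sc (\<lambda>e. F a b c d e)"
  by (simp_all add: quintilin_def)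

lemma lin_fun_add: "lin_fun sc f \<Longrightarrow> f (a + b) = f a + f b"
  by (simp add: lin_fun_def)
lemma lin_fun_scale: "lin_fun sc f \<Longrightarrow> f (sc c a) = c * f a"
  by (simp add: lin_fun_def)
lemma lin_fun_zero: "lin_fun sc f \<Longrightarrow> f 0 = 0"
  using lin_fun_add[of sc f 0 0] by (metis add_0 add_cancel_right_right)
lemma lin_fun_diff: "lin_fun sc f \<Longrightarrow> f (a - b) = f a - f b"
  using lin_fun_add[of sc f "a - b" b] by (simp add: algebra_simps)
lemma lin_fun_sum_list: "lin_fun sc f \<Longrightarrow> f (\<Sum>x\<leftarrow>L. g x) = (\<Sum>x\<leftarrow>L. f (g x))"
  by (induction L) (auto simp: lin_fun_add lin_fun_zero)
lemma lin_fun_sum_list_pairs: "lin_fun sc f \<Longrightarrow> f (\<Sum>(a,b)\<leftarrow>L. F a b) = (\<Sum>(a,b)\<leftarrow>L. f (F a b))"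
  by (simp add: lin_fun_sum_list split_def)
lemma lin_fun_sum_list_triples:
  "lin_fun sc f \<Longrightarrow> f (\<Sum>(a,b,c)\<leftarrow>L. F a b c) = (\<Sum>(a,b,c)\<leftarrow>L. f (F a b c))"
  by (simp add: lin_fun_sum_list split_def)
lemma lin_fun_sum: "lin_fun sc f \<Longrightarrow> f (sum g B) = (\<Sum>x\<in>B. f (g x))"
  by (induction B rule: infinite_finite_induct) (auto simp: lin_fun_add lin_fun_zero)

context vector_space
begin

lemma finite_subset_coordinates:
  assumes "finite V"
  obtains B g where "finite B" "\<And>e. e \<in> B \<Longrightarrow> lin_fun scale (g e)"
    "\<And>a. a \<in> V \<Longrightarrow> a = (\<Sum>e\<in>B. scale (g e a) e)"
proof -
  interpret vp: vector_space_pair scale "(*) :: 'a \<Rightarrow> 'a \<Rightarrow> 'a"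
    unfolding vector_space_pair_def using vector_space_axioms vector_space_field_mult by blast
  obtain B where B: "B \<subseteq> V" "independent B" "V \<subseteq> span B"
    by (rule maximal_independent_subset)
  have finB: "finite B" using B(1) assms by (rule finite_subset)
  have "\<exists>g. Vector_Spaces.linear scale (*) g \<and> (\<forall>x\<in>B. g x = (if x = e then 1 else 0))" for e
    using vp.linear_independent_extend[OF B(2), of "\<lambda>x. if x = e then 1 else 0"] by simp
  then obtain g where g: "\<And>e. Vector_Spaces.linear scale (*) (g e)"
    "\<And>e x. x \<in> B \<Longrightarrow> g e x = (if x = e then 1 else 0)"
    by metis
  have rep: "a = (\<Sum>e\<in>B. scale (g e a) e)" if "a \<in> V" for a
  proof -
    from that B(3) have "a \<in> span B" by auto
    then obtain u where u: "a = (\<Sum>v\<in>B. scale (u v) v)"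
      using span_finite[OF finB] by auto
    have "g e a = u e" if e: "e \<in> B" for e
    proof -
      have "g e a = (\<Sum>v\<in>B. u v * g e v)"
        unfolding u by (simp add: vp.linear_sum[OF g(1)] vp.linear_scale[OF g(1)])
      also have "\<dots> = (\<Sum>v\<in>B. if v = e then u v else 0)"
        using g(2) by (intro sum.cong) auto
      finally show ?thesis using e finB by simp
    qed
    then show ?thesis using u by (metis (no_types, lifting) sum.cong)
  qed
  have "lin_fun scale (g e)" if "e \<in> B" for e
    using g(1) by (simp add: lin_fun_def linear_iff)
  from finB this rep show ?thesis by (rule that)
qed

lemma lin_fun_separates:
  assumes "\<And>f. lin_fun scale f \<Longrightarrow> f u = f v"
  shows "u = v"
proof -
  obtain B g where B: "finite B" "\<And>e. e \<in> B \<Longrightarrow> lin_fun scale (g e)"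
    "u - v = (\<Sum>e\<in>B. scale (g e (u - v)) e)"
    using finite_subset_coordinates[of "{u - v}"] by auto
  have "u - v = (\<Sum>e\<in>B. scale 0 e)"
    by (subst B(3)) (intro sum.cong refl, simp add: lin_fun_diff[OF B(2)] assms[OF B(2)])
  then show ?thesis by simp
qed

lemma lin_fun_expansion:
  assumes "finite V"
  obtains B g where "finite B" "\<And>e. e \<in> B \<Longrightarrow> lin_fun scale (g e)"
    "\<And>F a. a \<in> V \<Longrightarrow> lin_fun scale F \<Longrightarrow> F a = (\<Sum>e\<in>B. g e a * F e)"
proof -
  obtain B g where B: "finite B" "\<And>e. e \<in> B \<Longrightarrow> lin_fun scale (g e)"
    "\<And>a. a \<in> V \<Longrightarrow> a = (\<Sum>e\<in>B. scale (g e a) e)"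
    using finite_subset_coordinates[OF assms] by blast
  have "F a = (\<Sum>e\<in>B. g e a * F e)" if "a \<in> V" "lin_fun scale F" for F a
  proof -
    have "F a = F (\<Sum>e\<in>B. scale (g e a) e)" using B(3) that(1) by metis
    also have "\<dots> = (\<Sum>e\<in>B. g e a * F e)" using that(2) by (simp add: lin_fun_sum lin_fun_scale)
    finally show ?thesis .
  qed
  then show ?thesis using that B(1,2) by blast
qed

lemma teq2_sum:
  assumes "teq2 scale L M" "bilin scale F"
  shows "(\<Sum>(a,b)\<leftarrow>L. F a b) = (\<Sum>(a,b)\<leftarrow>M. F a b)"
proof -
  obtain B g where B: "finite B" "\<And>e. e \<in> B \<Longrightarrow> lin_fun scale (g e)"
    "\<And>F a. a \<in> fst ` set (L @ M) \<Longrightarrow> lin_fun scale F \<Longrightarrow> F a = (\<Sum>e\<in>B. g e a * F e)"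
    using lin_fun_expansion[of "fst ` set (L @ M)"] by blast
  have ex: "F a b = (\<Sum>e\<in>B. g e a * F e b)" if "(a,b) \<in> set (L @ M)" for a b
    using B(3)[of a "\<lambda>x. F x b"] that bilinD(1)[OF assms(2)] by force
  have "(\<Sum>(a,b)\<leftarrow>L. F a b) = (\<Sum>(a,b)\<leftarrow>L. \<Sum>e\<in>B. g e a * F e b)"
    by (intro arg_cong[where f=sum_list] map_cong) (auto simp: ex)
  also have "\<dots> = (\<Sum>e\<in>B. \<Sum>(a,b)\<leftarrow>L. g e a * F e b)"
    by (simp add: sum_list_sum_commute split_def)
  also have "\<dots> = (\<Sum>e\<in>B. \<Sum>(a,b)\<leftarrow>M. g e a * F e b)"
    using assms(1) B(2) bilinD(2)[OF assms(2)] by (intro sum.cong) (auto simp: teq2_def)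
  also have "\<dots> = (\<Sum>(a,b)\<leftarrow>M. \<Sum>e\<in>B. g e a * F e b)"
    by (simp add: sum_list_sum_commute split_def)
  also have "\<dots> = (\<Sum>(a,b)\<leftarrow>M. F a b)"
    by (intro arg_cong[where f=sum_list] map_cong) (auto simp: ex)
  finally show ?thesis .
qed

lemma teq3_sum:
  assumes "teq3 scale L M" "trilin scale F"
  shows "(\<Sum>(a,b,c)\<leftarrow>L. F a b c) = (\<Sum>(a,b,c)\<leftarrow>M. F a b c)"
proof -
  obtain B g where B: "finite B" "\<And>e. e \<in> B \<Longrightarrow> lin_fun scale (g e)"
    "\<And>F a. a \<in> fst ` set (L @ M) \<Longrightarrow> lin_fun scale F \<Longrightarrow> F a = (\<Sum>e\<in>B. g e a * F e)"
    using lin_fun_expansion[of "fst ` set (L @ M)"] by blast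
  obtain C k where C: "finite C" "\<And>e. e \<in> C \<Longrightarrow> lin_fun scale (k e)"
    "\<And>F a. a \<in> (fst \<circ> snd) ` set (L @ M) \<Longrightarrow> lin_fun scale F \<Longrightarrow> F a = (\<Sum>e\<in>C. k e a * F e)"
    using lin_fun_expansion[of "(fst \<circ> snd) ` set (L @ M)"] by blast
  have ex: "F a b c = (\<Sum>e\<in>B. \<Sum>e'\<in>C. g e a * k e' b * F e e' c)" if "(a,b,c) \<in> set (L @ M)" for a b c
  proof -
    have "F a b c = (\<Sum>e\<in>B. g e a * F e b c)"
      using B(3)[of a "\<lambda>x. F x b c"] that trilinD(1)[OF assms(2)] by force
    also have "\<dots> = (\<Sum>e\<in>B. g e a * (\<Sum>e'\<in>C. k e' b * F e e' c))"
      using C(3)[of b "\<lambda>x. F _ x c"] that trilinD(2)[OF assms(2)] by (intro sum.cong refl) force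
    also have "\<dots> = (\<Sum>e\<in>B. \<Sum>e'\<in>C. g e a * k e' b * F e e' c)"
      by (simp add: sum_distrib_left mult.assoc)
    finally show ?thesis .
  qed
  have "(\<Sum>(a,b,c)\<leftarrow>L. F a b c) = (\<Sum>(a,b,c)\<leftarrow>L. \<Sum>e\<in>B. \<Sum>e'\<in>C. g e a * k e' b * F e e' c)"
    by (intro arg_cong[where f=sum_list] map_cong) (auto simp: ex)
  also have "\<dots> = (\<Sum>e\<in>B. \<Sum>e'\<in>C. \<Sum>(a,b,c)\<leftarrow>L. g e a * k e' b * F e e' c)"
    by (simp add: sum_list_sum_commute split_def)
  also have "\<dots> = (\<Sum>e\<in>B. \<Sum>e'\<in>C. \<Sum>(a,b,c)\<leftarrow>M. g e a * k e' b * F e e' c)"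
    using assms(1) B(2) C(2) trilinD(3)[OF assms(2)] by (intro sum.cong) (auto simp: teq3_def)
  also have "\<dots> = (\<Sum>(a,b,c)\<leftarrow>M. \<Sum>e\<in>B. \<Sum>e'\<in>C. g e a * k e' b * F e e' c)"
    by (simp add: sum_list_sum_commute split_def)
  also have "\<dots> = (\<Sum>(a,b,c)\<leftarrow>M. F a b c)"
    by (intro arg_cong[where f=sum_list] map_cong) (auto simp: ex)
  finally show ?thesis .
qed

end

section \<open>Sweedler sums\<close>

named_theorems lin_intros

locale hopf_alg =
  fixes sc :: "'k::field \<Rightarrow> 'h::ring_1 \<Rightarrow> 'h"
    and \<Delta> :: "'h \<Rightarrow> ('h \<times> 'h) list" and \<epsilon> :: "'h \<Rightarrow> 'k" and S :: "'h \<Rightarrow> 'h"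
  assumes hopf: "hopf_algebra sc \<Delta> \<epsilon> S"
begin

sublocale vector_space sc
  using hopf by (simp add: hopf_algebra_def)

lemma comult_add: "teq2 sc (\<Delta> (a + b)) (\<Delta> a @ \<Delta> b)"
  and comult_scale: "teq2 sc (\<Delta> (sc c a)) (map (\<lambda>(x,y). (sc c x, y)) (\<Delta> a))"
  and comult_coassoc: "teq3 sc (delta2 \<Delta> h) (delta2' \<Delta> h)"
  and lin_fun_counit: "lin_fun sc \<epsilon>"
  and counit_left: "(\<Sum>(a,b)\<leftarrow>\<Delta> h. sc (\<epsilon> a) b) = h"
  and counit_right: "(\<Sum>(a,b)\<leftarrow>\<Delta> h. sc (\<epsilon> b) a) = h"
  and comult_mult: "teq2 sc (\<Delta> (a * b)) (concat (map (\<lambda>(x,y). map (\<lambda>(u,v). (x * u, y * v)) (\<Delta> b)) (\<Delta> a)))"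
  and comult_one: "teq2 sc (\<Delta> 1) [(1, 1)]"
  and counit_mult: "\<epsilon> (a * b) = \<epsilon> a * \<epsilon> b"
  and counit_one: "\<epsilon> 1 = 1"
  and antipode_add: "S (a + b) = S a + S b"
  and antipode_scale: "S (sc c a) = sc c (S a)"
  and antipode_left: "(\<Sum>(a,b)\<leftarrow>\<Delta> h. S a * b) = sc (\<epsilon> h) 1"
  and antipode_right: "(\<Sum>(a,b)\<leftarrow>\<Delta> h. a * S b) = sc (\<epsilon> h) 1"
  and scale_mult_left: "sc c (a * b) = sc c a * b"
  and scale_mult_right: "sc c (a * b) = a * sc c b"
  using hopf unfolding hopf_algebra_def by blast+

definition sw2 :: "'h \<Rightarrow> ('h \<Rightarrow> 'h \<Rightarrow> 'k) \<Rightarrow> 'k" where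
  "sw2 h F = (\<Sum>(a,b)\<leftarrow>\<Delta> h. F a b)"

definition sw3 :: "'h \<Rightarrow> ('h \<Rightarrow> 'h \<Rightarrow> 'h \<Rightarrow> 'k) \<Rightarrow> 'k" where
  "sw3 h F = sw2 h (\<lambda>u c. sw2 u (\<lambda>a b. F a b c))"

definition sw4 :: "'h \<Rightarrow> ('h \<Rightarrow> 'h \<Rightarrow> 'h \<Rightarrow> 'h \<Rightarrow> 'k) \<Rightarrow> 'k" where
  "sw4 h F = sw2 h (\<lambda>u d. sw3 u (\<lambda>a b c. F a b c d))"

definition sw5 :: "'h \<Rightarrow> ('h \<Rightarrow> 'h \<Rightarrow> 'h \<Rightarrow> 'h \<Rightarrow> 'h \<Rightarrow> 'k) \<Rightarrow> 'k" where
  "sw5 h F = sw2 h (\<lambda>u e. sw4 u (\<lambda>a b c d. F a b c d e))"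

lemma sw2_cong: "(\<And>a b. F a b = G a b) \<Longrightarrow> sw2 h F = sw2 h G"
  by (simp add: sw2_def)

lemma lin_fun_comp: "lin_fun sc f \<Longrightarrow> lin_endo sc g \<Longrightarrow> lin_fun sc (\<lambda>a. f (g a))"
  by (simp add: lin_fun_def lin_endo_def)

lemma lin_endo_comp: "lin_endo sc f \<Longrightarrow> lin_endo sc g \<Longrightarrow> lin_endo sc (\<lambda>a. f (g a))"
  by (simp add: lin_endo_def)

lemma lin_endo_id [lin_intros]: "lin_endo sc (\<lambda>a. a)"
  by (simp add: lin_endo_def)

lemma lin_endo_mult_const [lin_intros]: "lin_endo sc g \<Longrightarrow> lin_endo sc (\<lambda>a. g a * c)"
  by (simp add: lin_endo_def distrib_right scale_mult_left)

lemma lin_endo_const_mult [lin_intros]: "lin_endo sc g \<Longrightarrow> lin_endo sc (\<lambda>a. c * g a)"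
  by (simp add: lin_endo_def distrib_left scale_mult_right)

lemma lin_endo_S [lin_intros]: "lin_endo sc g \<Longrightarrow> lin_endo sc (\<lambda>a. S (g a))"
  by (rule lin_endo_comp) (simp add: lin_endo_def antipode_add antipode_scale)

lemma lin_fun_counit_comp [lin_intros]: "lin_endo sc g \<Longrightarrow> lin_fun sc (\<lambda>a. \<epsilon> (g a))"
  using lin_fun_comp[OF lin_fun_counit] .

lemma lin_fun_mult_const [lin_intros]: "lin_fun sc f \<Longrightarrow> lin_fun sc (\<lambda>a. f a * c)"
  by (simp add: lin_fun_def distrib_right)

lemma lin_fun_const_mult [lin_intros]: "lin_fun sc f \<Longrightarrow> lin_fun sc (\<lambda>a. c * f a)"
  by (simp add: lin_fun_def distrib_left mult.left_commute)

lemma lin_fun_plusI [lin_intros]: "lin_fun sc f \<Longrightarrow> lin_fun sc g \<Longrightarrow> lin_fun sc (\<lambda>a. f a + g a)"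
  by (simp add: lin_fun_def distrib_left)

lemma lin_fun_sum_listI: "(\<And>p. lin_fun sc (\<lambda>a. F a p)) \<Longrightarrow> lin_fun sc (\<lambda>a. \<Sum>p\<leftarrow>L. F a p)"
proof (induction L)
  case Nil
  then show ?case by (simp add: lin_fun_def)
next
  case (Cons x L)
  then show ?case using lin_fun_plusI[of "\<lambda>a. F a x" "\<lambda>a. \<Sum>p\<leftarrow>L. F a p"] by simp
qed

lemma lin_fun_sum_list_pairsI:
  "(\<And>p q. lin_fun sc (\<lambda>a. F a p q)) \<Longrightarrow> lin_fun sc (\<lambda>a. \<Sum>(p,q)\<leftarrow>L. F a p q)"
  by (rule lin_fun_sum_listI) (simp add: split_def)

lemma lin_fun_sw2_param [lin_intros]:
  "(\<And>p q. lin_fun sc (\<lambda>a. F a p q)) \<Longrightarrow> lin_fun sc (\<lambda>a. sw2 h (F a))"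
  unfolding sw2_def by (rule lin_fun_sum_list_pairsI)

lemma lin_fun_sw2: assumes "bilin sc F" shows "lin_fun sc (\<lambda>h. sw2 h F)"
proof -
  have "sw2 (sc c a) F = (\<Sum>(x,y)\<leftarrow>map (\<lambda>(x,y). (sc c x, y)) (\<Delta> a). F x y)" for c a
    unfolding sw2_def by (rule teq2_sum[OF comult_scale assms])
  then have "sw2 (sc c a) F = c * sw2 a F" for c a
    by (simp add: sw2_def split_def comp_def lin_fun_scale[OF bilinD(1)[OF assms]] sum_list_const_mult)
  moreover have "sw2 (a + b) F = sw2 a F + sw2 b F" for a b
    unfolding sw2_def by (simp add: teq2_sum[OF comult_add assms])
  ultimately show ?thesis by (simp add: lin_fun_def)
qed

lemma lin_fun_sw2_comp [lin_intros]: "bilin sc F \<Longrightarrow> lin_endo sc g \<Longrightarrow> lin_fun sc (\<lambda>a. sw2 (g a) F)"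
  using lin_fun_comp[OF lin_fun_sw2] .

declare bilinI [lin_intros] trilinI [lin_intros] quadrilinI [lin_intros] quintilinI [lin_intros]

lemma lin_fun_sw3_param [lin_intros]:
  "(\<And>p q r. lin_fun sc (\<lambda>a. F a p q r)) \<Longrightarrow> lin_fun sc (\<lambda>a. sw3 h (F a))"
  unfolding sw3_def by (intro lin_intros)

lemma lin_fun_sw4_param [lin_intros]:
  "(\<And>p q r s. lin_fun sc (\<lambda>a. F a p q r s)) \<Longrightarrow> lin_fun sc (\<lambda>a. sw4 h (F a))"
  unfolding sw4_def by (intro lin_intros)

lemma lin_fun_sw5_param [lin_intros]:
  "(\<And>p q r s t. lin_fun sc (\<lambda>a. F a p q r s t)) \<Longrightarrow> lin_fun sc (\<lambda>a. sw5 h (F a))"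
  unfolding sw5_def by (intro lin_intros)

lemma lin_fun_sw3: "trilin sc F \<Longrightarrow> lin_fun sc (\<lambda>h. sw3 h F)"
  unfolding sw3_def by (intro lin_intros lin_fun_sw2) (auto dest: trilinD)

lemma lin_fun_sw3_comp [lin_intros]: "trilin sc F \<Longrightarrow> lin_endo sc g \<Longrightarrow> lin_fun sc (\<lambda>a. sw3 (g a) F)"
  using lin_fun_comp[OF lin_fun_sw3] .

lemma sum_delta2_eq: "(\<Sum>(a,b,c)\<leftarrow>delta2 \<Delta> h. F a b c) = sw3 h F"
  by (simp add: delta2_def sw3_def sw2_def sum_list_map_concat comp_def split_def)

lemma sw2_coassoc:
  assumes "trilin sc F"
  shows "sw3 h F = sw2 h (\<lambda>a u. sw2 u (\<lambda>b c. F a b c))"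
proof -
  have "(\<Sum>(a,b,c)\<leftarrow>delta2' \<Delta> h. F a b c) = sw2 h (\<lambda>a u. sw2 u (\<lambda>b c. F a b c))"
    by (simp add: delta2'_def sw2_def sum_list_map_concat comp_def split_def)
  then show ?thesis
    using teq3_sum[OF comult_coassoc assms, of h] by (simp add: sum_delta2_eq)
qed

lemma sw2_counit_left: "lin_fun sc f \<Longrightarrow> sw2 h (\<lambda>a b. \<epsilon> a * f b) = f h"
  using lin_fun_sum_list[of sc f "\<lambda>(a,b). sc (\<epsilon> a) b" "\<Delta> h"] counit_left[of h]
  by (simp add: sw2_def split_def lin_fun_scale)

lemma sw2_counit_right: "lin_fun sc f \<Longrightarrow> sw2 h (\<lambda>a b. f a * \<epsilon> b) = f h"
  using lin_fun_sum_list[of sc f "\<lambda>(a,b). sc (\<epsilon> b) a" "\<Delta> h"] counit_right[of h]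
  by (simp add: sw2_def split_def lin_fun_scale mult.commute)

lemma sw2_mult:
  assumes "bilin sc F"
  shows "sw2 (a * b) F = sw2 a (\<lambda>a1 a2. sw2 b (\<lambda>b1 b2. F (a1 * b1) (a2 * b2)))"
  unfolding sw2_def teq2_sum[OF comult_mult assms]
  by (simp add: sum_list_map_concat comp_def split_def)

lemma sw2_one: "bilin sc F \<Longrightarrow> sw2 1 F = F 1 1"
  unfolding sw2_def teq2_sum[OF comult_one] by simp

lemma sw2_antipode_left: "lin_fun sc f \<Longrightarrow> sw2 h (\<lambda>a b. f (S a * b)) = \<epsilon> h * f 1"
  using lin_fun_sum_list[of sc f "\<lambda>(a,b). S a * b" "\<Delta> h"] antipode_left[of h]
  by (simp add: sw2_def split_def lin_fun_scale)

lemma sw2_antipode_right: "lin_fun sc f \<Longrightarrow> sw2 h (\<lambda>a b. f (a * S b)) = \<epsilon> h * f 1"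
  using lin_fun_sum_list[of sc f "\<lambda>(a,b). a * S b" "\<Delta> h"] antipode_right[of h]
  by (simp add: sw2_def split_def lin_fun_scale)

lemma sw2_commute: "sw2 a (\<lambda>x y. sw2 b (\<lambda>p q. F x y p q)) = sw2 b (\<lambda>p q. sw2 a (\<lambda>x y. F x y p q))"
  unfolding sw2_def
  using sum_list_map_commute[where G="\<lambda>x pq. F (fst x) (snd x) (fst pq) (snd pq)" and L="\<Delta> a" and M="\<Delta> b"]
  by (simp add: split_def)

lemma sw3_sw2_commute:
  "sw3 a (\<lambda>x y z. sw2 b (\<lambda>p q. F x y z p q)) = sw2 b (\<lambda>p q. sw3 a (\<lambda>x y z. F x y z p q))"
  unfolding sw3_def by (subst sw2_commute[symmetric]) (intro sw2_cong sw2_commute)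

lemma sw4_sw2_commute:
  "sw4 a (\<lambda>x y z w. sw2 b (\<lambda>p q. F x y z w p q)) = sw2 b (\<lambda>p q. sw4 a (\<lambda>x y z w. F x y z w p q))"
  unfolding sw4_def by (subst sw2_commute[symmetric]) (intro sw2_cong sw3_sw2_commute)

lemma sw2_nested_commute:
  "sw2 x (\<lambda>x1 x2. sw2 a (\<lambda>a1 a2. sw2 b (\<lambda>p q. G x1 x2 a1 a2 p q)))
   = sw2 b (\<lambda>p q. sw2 x (\<lambda>x1 x2. sw2 a (\<lambda>a1 a2. G x1 x2 a1 a2 p q)))"
  by (subst sw2_commute[symmetric]) (intro sw2_cong sw2_commute)

lemma sw3_nested_commute:
  "sw2 x (\<lambda>x1 x2. sw2 a (\<lambda>a1 a2. sw3 b (\<lambda>p q r. G x1 x2 a1 a2 p q r)))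
   = sw3 b (\<lambda>p q r. sw2 x (\<lambda>x1 x2. sw2 a (\<lambda>a1 a2. G x1 x2 a1 a2 p q r)))"
  unfolding sw3_def by (subst sw2_nested_commute, rule sw2_cong, rule sw2_nested_commute)

lemma sw2_mult_sw2: "sw2 U F * sw2 V G = sw2 U (\<lambda>u1 u2. sw2 V (\<lambda>v1 v2. F u1 u2 * G v1 v2))"
proof -
  have "sw2 U F * sw2 V G = sw2 U (\<lambda>u1 u2. F u1 u2 * sw2 V G)"
    by (simp add: sw2_def[of U] sum_list_mult_const split_def)
  then show ?thesis
    by (simp add: sw2_def[of V] sum_list_const_mult[symmetric] split_def)
qed

text \<open>
  The lemmas \<open>swN_expand_k\<close> replace the \<open>k\<close>-th leg of an \<open>N\<close>-fold Sweedler sum by its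
  coproduct: for \<open>k = 1\<close> this is the definition, otherwise it is coassociativity.
\<close>

lemma sw2_expand_2: "trilin sc F \<Longrightarrow> sw2 h (\<lambda>a b. sw2 b (\<lambda>p q. F a p q)) = sw3 h F"
  by (simp add: sw2_coassoc)

lemma sw3_expand_1: "sw3 h (\<lambda>a b c. sw2 a (\<lambda>p q. F p q b c)) = sw4 h F"
  by (simp add: sw3_def sw4_def)

lemma sw3_expand_2:
  assumes "quadrilin sc F"
  shows "sw3 h (\<lambda>a b c. sw2 b (\<lambda>p q. F a p q c)) = sw4 h F"
proof -
  have "sw2 u (\<lambda>a b. sw2 b (\<lambda>p q. F a p q c)) = sw3 u (\<lambda>a p q. F a p q c)" for u c
    by (rule sw2_expand_2) (intro trilinI; rule quadrilinD[OF assms])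
  then show ?thesis by (simp add: sw3_def sw4_def)
qed

lemma sw3_expand_3:
  assumes "quadrilin sc F"
  shows "sw3 h (\<lambda>a b c. sw2 c (\<lambda>p q. F a b p q)) = sw4 h F"
proof -
  have "sw3 h (\<lambda>a b c. sw2 c (\<lambda>p q. F a b p q)) = sw2 h (\<lambda>u c. sw2 c (\<lambda>p q. sw2 u (\<lambda>a b. F a b p q)))"
    unfolding sw3_def by (rule sw2_cong, rule sw2_commute)
  also have "\<dots> = sw3 h (\<lambda>u p q. sw2 u (\<lambda>a b. F a b p q))"
    by (rule sw2_expand_2) (intro lin_intros; rule quadrilinD[OF assms])
  finally show ?thesis by (simp add: sw3_def sw4_def)
qed

lemma sw4_expand_2:
  assumes "quintilin sc F"
  shows "sw4 h (\<lambda>a b c d. sw2 b (\<lambda>p q. F a p q c d)) = sw5 h F"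
proof -
  have "sw3 u (\<lambda>a b c. sw2 b (\<lambda>p q. F a p q c d)) = sw4 u (\<lambda>a p q c. F a p q c d)" for u d
    by (rule sw3_expand_2) (intro quadrilinI; rule quintilinD[OF assms])
  then show ?thesis by (simp add: sw4_def sw5_def)
qed

lemma sw4_expand_4:
  assumes "quintilin sc F"
  shows "sw4 h (\<lambda>a b c d. sw2 d (\<lambda>p q. F a b c p q)) = sw5 h F"
proof -
  have "sw4 h (\<lambda>a b c d. sw2 d (\<lambda>p q. F a b c p q)) = sw2 h (\<lambda>u d. sw2 d (\<lambda>p q. sw3 u (\<lambda>a b c. F a b c p q)))"
    unfolding sw4_def by (rule sw2_cong, rule sw3_sw2_commute)
  also have "\<dots> = sw3 h (\<lambda>u p q. sw3 u (\<lambda>a b c. F a b c p q))"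
    by (rule sw2_expand_2) (intro lin_intros; rule quintilinD[OF assms])
  finally show ?thesis by (simp add: sw3_def sw4_def sw5_def)
qed

lemma sw2_expand_2_sw4:
  assumes "quintilin sc G"
  shows "sw2 h (\<lambda>a b. sw4 b (G a)) = sw5 h G"
proof -
  have "sw2 h (\<lambda>a b. sw4 b (G a)) = sw3 h (\<lambda>a u e. sw3 u (\<lambda>x y z. G a x y z e))"
    unfolding sw4_def by (rule sw2_expand_2) (intro lin_intros; rule quintilinD[OF assms])
  also have "\<dots> = sw3 h (\<lambda>a u e. sw2 u (\<lambda>v z. sw2 v (\<lambda>x y. G a x y z e)))"
    by (simp add: sw3_def)
  also have "\<dots> = sw4 h (\<lambda>a v z e. sw2 v (\<lambda>x y. G a x y z e))"
    by (rule sw3_expand_2) (intro lin_intros; rule quintilinD[OF assms])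
  also have "\<dots> = sw5 h G"
    by (rule sw4_expand_2[OF assms])
  finally show ?thesis .
qed

lemma sw3_expand_2_sw3:
  assumes "quintilin sc F"
  shows "sw3 h (\<lambda>a b c. sw3 b (\<lambda>x y z. F a x y z c)) = sw5 h F"
proof -
  have "sw3 h (\<lambda>a b c. sw3 b (\<lambda>x y z. F a x y z c))
      = sw3 h (\<lambda>a b c. sw2 b (\<lambda>u z. sw2 u (\<lambda>x y. F a x y z c)))"
    by (simp add: sw3_def[of b for b])
  also have "\<dots> = sw4 h (\<lambda>a u z c. sw2 u (\<lambda>x y. F a x y z c))"
    by (rule sw3_expand_2) (intro lin_intros; rule quintilinD[OF assms])
  also have "\<dots> = sw5 h F"
    by (rule sw4_expand_2[OF assms])
  finally show ?thesis .
qed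

lemma sw3_counit_1: "bilin sc G \<Longrightarrow> sw3 h (\<lambda>a b c. \<epsilon> a * G b c) = sw2 h G"
  unfolding sw3_def by (rule sw2_cong, rule sw2_counit_left) (auto dest: bilinD)

lemma sw3_counit_2: "bilin sc G \<Longrightarrow> sw3 h (\<lambda>a b c. \<epsilon> b * G a c) = sw2 h G"
  by (subst sw2_expand_2[symmetric]) (auto intro!: lin_intros dest: bilinD intro: sw2_cong sw2_counit_left)

lemma sw3_one:
  assumes "trilin sc G"
  shows "sw3 1 G = G 1 1 1"
proof -
  have "sw3 1 G = sw2 1 (\<lambda>a b. G a b 1)"
    unfolding sw3_def by (rule sw2_one) (intro lin_intros; rule trilinD[OF assms])
  also have "\<dots> = G 1 1 1"
    by (rule sw2_one) (intro lin_intros; rule trilinD[OF assms])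
  finally show ?thesis .
qed

lemma lin_conv: "lin_fun sc f \<Longrightarrow> lin_fun sc g \<Longrightarrow> lin_fun sc (conv \<Delta> f g)"
  using lin_fun_sw2[of "\<lambda>a b. f a * g b"] by (simp add: conv_def sw2_def lin_intros)

lemma conv_eq_sw2: "conv \<Delta> f g h = sw2 h (\<lambda>a b. f a * g b)"
  by (simp add: conv_def sw2_def)

section \<open>The antipode\<close>

lemma antipode_one: "S 1 = 1"
proof (rule lin_fun_separates)
  fix f assume f: "lin_fun sc f"
  have "sw2 1 (\<lambda>a b. f (S a * b)) = f (S 1 * 1)"
    by (rule sw2_one) (intro lin_intros lin_fun_comp[OF f])
  then show "f (S 1) = f 1"
    using sw2_antipode_left[OF f, of 1] by (simp add: counit_one)
qed

lemma counit_S: "\<epsilon> (S h) = \<epsilon> h"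
proof -
  have "\<epsilon> (S h) = sw2 h (\<lambda>a b. \<epsilon> (S a) * \<epsilon> b)"
    by (rule sw2_counit_right[symmetric]) (intro lin_intros lin_fun_counit)
  also have "\<dots> = sw2 h (\<lambda>a b. \<epsilon> (S a * b))"
    by (simp add: counit_mult)
  also have "\<dots> = \<epsilon> h"
    using sw2_antipode_left[OF lin_fun_counit] by (simp add: counit_one)
  finally show ?thesis .
qed

lemma antipode_mult_expand:
  assumes f: "lin_fun sc f"
  shows "f (S b * S a) = sw3 a (\<lambda>a1 p q. sw3 b (\<lambda>b1 r s. f (S b1 * (S a1 * p) * r * S (q * s))))"
proof -
  note L = lin_intros lin_fun_comp[OF f]
  have "f (S b * S a) = sw2 a (\<lambda>a1 a2. f (S b * S a1) * \<epsilon> a2)"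
    by (rule sw2_counit_right[of "\<lambda>x. f (S b * S x)", symmetric]) (intro L)
  also have "\<dots> = sw2 a (\<lambda>a1 a2. sw2 b (\<lambda>b1 b2. f (S b1 * S a1) * \<epsilon> (a2 * b2)))"
  proof (rule sw2_cong)
    fix a1 a2
    have "f (S b * S a1) = sw2 b (\<lambda>b1 b2. f (S b1 * S a1) * \<epsilon> b2)"
      by (rule sw2_counit_right[of "\<lambda>y. f (S y * S a1)", symmetric]) (intro L)
    then show "f (S b * S a1) * \<epsilon> a2 = sw2 b (\<lambda>b1 b2. f (S b1 * S a1) * \<epsilon> (a2 * b2))"
      by (simp add: sw2_def sum_list_mult_const[symmetric] sum_list_const_mult[symmetric] split_def
          counit_mult mult_ac)
  qed
  also have "\<dots> = sw2 a (\<lambda>a1 a2. sw2 b (\<lambda>b1 b2.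
      sw2 a2 (\<lambda>p q. sw2 b2 (\<lambda>r s. f (S b1 * S a1 * (p * r * S (q * s)))))))"
  proof (intro sw2_cong)
    fix a1 a2 b1 b2
    have "sw2 (a2 * b2) (\<lambda>c d. f (S b1 * S a1 * (c * S d)))
        = sw2 a2 (\<lambda>p q. sw2 b2 (\<lambda>r s. f (S b1 * S a1 * (p * r * S (q * s)))))"
      by (rule sw2_mult) (intro L)
    then show "f (S b1 * S a1) * \<epsilon> (a2 * b2)
        = sw2 a2 (\<lambda>p q. sw2 b2 (\<lambda>r s. f (S b1 * S a1 * (p * r * S (q * s)))))"
      using sw2_antipode_right[of "\<lambda>t. f (S b1 * S a1 * t)" "a2 * b2"] by (simp add: L mult.commute)
  qed
  also have "\<dots> = sw2 a (\<lambda>a1 a2. sw2 a2 (\<lambda>p q.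
      sw2 b (\<lambda>b1 b2. sw2 b2 (\<lambda>r s. f (S b1 * S a1 * (p * r * S (q * s)))))))"
    by (rule sw2_cong, rule sw2_commute)
  also have "\<dots> = sw3 a (\<lambda>a1 p q. sw2 b (\<lambda>b1 b2. sw2 b2 (\<lambda>r s. f (S b1 * S a1 * (p * r * S (q * s))))))"
    by (rule sw2_expand_2) (intro L)
  also have "\<dots> = sw3 a (\<lambda>a1 p q. sw3 b (\<lambda>b1 r s. f (S b1 * (S a1 * p) * r * S (q * s))))"
    by (simp only: mult.assoc, subst sw2_expand_2) (intro L, rule refl)
  finally show ?thesis .
qed

lemma antipode_mult_collapse:
  assumes f: "lin_fun sc f"
  shows "sw3 a (\<lambda>a1 p q. sw3 b (\<lambda>b1 r s. f (S b1 * (S a1 * p) * r * S (q * s)))) = f (S (a * b))"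
proof -
  note L = lin_intros lin_fun_comp[OF f]
  have "sw3 a (\<lambda>a1 p q. sw3 b (\<lambda>b1 r s. f (S b1 * (S a1 * p) * r * S (q * s))))
      = sw2 a (\<lambda>u q. \<epsilon> u * sw3 b (\<lambda>b1 r s. f (S b1 * 1 * r * S (q * s))))"
    unfolding sw3_def[of a]
    by (intro sw2_cong sw2_antipode_left[of "\<lambda>t. sw3 b (\<lambda>b1 r s. f (S b1 * t * r * S (_ * s)))"]) (intro L)
  also have "\<dots> = sw3 b (\<lambda>b1 r s. f (S b1 * r * S (a * s)))"
    by (subst sw2_counit_left) (intro L, simp)
  also have "\<dots> = sw2 b (\<lambda>u s. \<epsilon> u * f (S (a * s)))"
    unfolding sw3_def[of b]
    by (intro sw2_cong) (use sw2_antipode_left[of "\<lambda>t. f (t * S (a * _))"] in \<open>simp add: L\<close>)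
  also have "\<dots> = f (S (a * b))"
    by (rule sw2_counit_left[of "\<lambda>s. f (S (a * s))"]) (intro L)
  finally show ?thesis .
qed

text \<open>Both \<open>S b S a\<close> and \<open>S (a b)\<close> equal \<open>S(b\<^sub>1) S(a\<^sub>1) a\<^sub>2 b\<^sub>2 S(a\<^sub>3 b\<^sub>3)\<close>.\<close>

lemma antipode_mult: "S (a * b) = S b * S a"
  by (rule lin_fun_separates) (simp add: antipode_mult_expand antipode_mult_collapse)

lemma sw4_antipode_nested:
  assumes G: "bilin sc G"
  shows "sw4 c (\<lambda>c1 c2 c3 c4. G (c1 * S c4) (c2 * S c3)) = \<epsilon> c * G 1 1"
proof -
  note L = lin_intros bilinD[OF G] lin_fun_comp[OF bilinD(1)[OF G]] lin_fun_comp[OF bilinD(2)[OF G]]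
  have "sw4 c (\<lambda>c1 c2 c3 c4. G (c1 * S c4) (c2 * S c3))
      = sw3 c (\<lambda>c1 w c4. sw2 w (\<lambda>c2 c3. G (c1 * S c4) (c2 * S c3)))"
    by (rule sw3_expand_2[symmetric]) (intro L)
  also have "\<dots> = sw3 c (\<lambda>c1 w c4. \<epsilon> w * G (c1 * S c4) 1)"
    unfolding sw3_def by (intro sw2_cong sw2_antipode_right[of "\<lambda>t. G (_ * S _) t"] L)
  also have "\<dots> = sw2 c (\<lambda>c1 c4. G (c1 * S c4) 1)"
    by (rule sw3_counit_2) (intro L)
  also have "\<dots> = \<epsilon> c * G 1 1"
    using sw2_antipode_right[of "\<lambda>t. G t 1" c] by (simp add: L)
  finally show ?thesis .
qed

lemma sw2_S_expand:
  assumes F: "bilin sc F"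
  shows "sw2 (S h) F = sw4 h (\<lambda>h1 w c3 c4. sw2 (S h1 * w) (\<lambda>u v. F (u * S c4) (v * S c3)))"
proof -
  note L = lin_intros bilinD[OF F] lin_fun_comp[OF bilinD(1)[OF F]] lin_fun_comp[OF bilinD(2)[OF F]]
    lin_fun_sw2_comp[OF F]
  have "sw2 (S h) F = sw2 h (\<lambda>h1 h2. sw2 (S h1) F * \<epsilon> h2)"
    by (rule sw2_counit_right[of "\<lambda>x. sw2 (S x) F", symmetric]) (intro L)
  also have "\<dots> = sw2 h (\<lambda>h1 h2. sw2 (S h1) (\<lambda>p q. sw4 h2 (\<lambda>c1 c2 c3 c4. F (p * (c1 * S c4)) (q * (c2 * S c3)))))"
    using sw4_antipode_nested[of "\<lambda>a b. F (_ * a) (_ * b)"]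
    by (intro sw2_cong)
      (simp add: L sw2_def sum_list_mult_const[symmetric] sum_list_const_mult[symmetric] split_def mult.commute)
  also have "\<dots> = sw2 h (\<lambda>h1 h2. sw4 h2 (\<lambda>c1 c2 c3 c4. sw2 (S h1) (\<lambda>p q. F (p * c1 * S c4) (q * c2 * S c3))))"
    by (rule sw2_cong, subst sw4_sw2_commute[symmetric]) (simp add: mult.assoc)
  also have "\<dots> = sw5 h (\<lambda>h1 c1 c2 c3 c4. sw2 (S h1) (\<lambda>p q. F (p * c1 * S c4) (q * c2 * S c3)))"
    by (rule sw2_expand_2_sw4) (intro L)
  also have "\<dots> = sw4 h (\<lambda>h1 w c3 c4. sw2 w (\<lambda>c1 c2. sw2 (S h1) (\<lambda>p q. F (p * c1 * S c4) (q * c2 * S c3))))"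
    by (rule sw4_expand_2[symmetric]) (intro L)
  also have "\<dots> = sw4 h (\<lambda>h1 w c3 c4. sw2 (S h1 * w) (\<lambda>u v. F (u * S c4) (v * S c3)))"
    unfolding sw4_def sw3_def
    by (intro sw2_cong, subst sw2_commute, rule sw2_mult[symmetric]) (intro L)
  finally show ?thesis .
qed

text \<open>
  \<open>\<Delta>(S h) = \<Delta>(S h\<^sub>1) (h\<^sub>2 S h\<^sub>5 \<otimes> h\<^sub>3 S h\<^sub>4) = \<Delta>(S(h\<^sub>1) h\<^sub>2) (S h\<^sub>4 \<otimes> S h\<^sub>3) = S h\<^sub>2 \<otimes> S h\<^sub>1\<close>.
\<close>

lemma sw2_S:
  assumes F: "bilin sc F"
  shows "sw2 (S h) F = sw2 h (\<lambda>a b. F (S b) (S a))"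
proof -
  note L = lin_intros bilinD[OF F] lin_fun_comp[OF bilinD(1)[OF F]] lin_fun_comp[OF bilinD(2)[OF F]]
    lin_fun_sw2_comp[OF F]
  have "sw2 (S h) F = sw3 h (\<lambda>z c3 c4. sw2 z (\<lambda>h1 w. sw2 (S h1 * w) (\<lambda>u v. F (u * S c4) (v * S c3))))"
    by (simp add: sw2_S_expand[OF F] sw3_expand_1)
  also have "\<dots> = sw3 h (\<lambda>z c3 c4. \<epsilon> z * F (S c4) (S c3))"
    unfolding sw3_def
    by (intro sw2_cong, subst sw2_antipode_left[of "\<lambda>t. sw2 t (\<lambda>u v. F (u * S _) (v * S _))"])
      (intro L, subst sw2_one, intro L, simp)
  also have "\<dots> = sw2 h (\<lambda>a b. F (S b) (S a))"
    by (rule sw3_counit_1) (intro L)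
  finally show ?thesis .
qed

end

locale bij_hopf_alg = hopf_alg sc \<Delta> \<epsilon> S
  for sc :: "'k::field \<Rightarrow> 'h::ring_1 \<Rightarrow> 'h"
    and \<Delta> :: "'h \<Rightarrow> ('h \<times> 'h) list" and \<epsilon> :: "'h \<Rightarrow> 'k" and S :: "'h \<Rightarrow> 'h" +
  assumes bij_S: "bij S"
begin

abbreviation Sinv :: "'h \<Rightarrow> 'h" where "Sinv \<equiv> inv S"

lemma Sinv_S [simp]: "Sinv (S x) = x"
  using bij_S by (simp add: bij_def inv_f_f)

lemma S_Sinv [simp]: "S (Sinv x) = x"
  using bij_S by (simp add: bij_def surj_f_inv_f)

lemma Sinv_add: "Sinv (a + b) = Sinv a + Sinv b"
  by (metis S_Sinv Sinv_S antipode_add)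

lemma Sinv_scale: "Sinv (sc c a) = sc c (Sinv a)"
  by (metis S_Sinv Sinv_S antipode_scale)

lemma Sinv_mult: "Sinv (a * b) = Sinv b * Sinv a"
  by (metis S_Sinv Sinv_S antipode_mult)

lemma Sinv_one: "Sinv 1 = 1"
  by (metis Sinv_S antipode_one)

lemma counit_Sinv: "\<epsilon> (Sinv h) = \<epsilon> h"
  by (metis S_Sinv counit_S)

lemma lin_endo_Sinv [lin_intros]: "lin_endo sc g \<Longrightarrow> lin_endo sc (\<lambda>a. Sinv (g a))"
  by (rule lin_endo_comp) (simp add: lin_endo_def Sinv_add Sinv_scale)

lemma sw2_Sinv:
  assumes F: "bilin sc F"
  shows "sw2 (Sinv h) F = sw2 h (\<lambda>a b. F (Sinv b) (Sinv a))"
proof -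
  have "bilin sc (\<lambda>a b. F (Sinv b) (Sinv a))"
    by (intro lin_intros lin_fun_comp[OF bilinD(1)[OF F]] lin_fun_comp[OF bilinD(2)[OF F]])
  from sw2_S[OF this, of "Sinv h"] show ?thesis by simp
qed

lemma sw2_Sinv_Sinv:
  assumes F: "bilin sc F"
  shows "sw2 (Sinv (Sinv h)) F = sw2 h (\<lambda>a b. F (Sinv (Sinv a)) (Sinv (Sinv b)))"
proof -
  have "bilin sc (\<lambda>a b. F (Sinv b) (Sinv a))"
    by (intro lin_intros lin_fun_comp[OF bilinD(1)[OF F]] lin_fun_comp[OF bilinD(2)[OF F]])
  then show ?thesis by (simp add: sw2_Sinv[OF F] sw2_Sinv)
qed

lemma sw2_Sinv_antipode_left: "lin_fun sc f \<Longrightarrow> sw2 h (\<lambda>a b. f (Sinv b * a)) = \<epsilon> h * f 1"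
  using sw2_antipode_left[of "\<lambda>t. f (Sinv t)" h] by (simp add: lin_intros lin_fun_comp Sinv_mult Sinv_one)

lemma sw2_Sinv_antipode_right: "lin_fun sc f \<Longrightarrow> sw2 h (\<lambda>a b. f (b * Sinv a)) = \<epsilon> h * f 1"
  using sw2_antipode_right[of "\<lambda>t. f (Sinv t)" h] by (simp add: lin_intros lin_fun_comp Sinv_mult Sinv_one)

end

locale cqt_hopf_alg = bij_hopf_alg sc \<Delta> \<epsilon> S
  for sc :: "'k::field \<Rightarrow> 'h::ring_1 \<Rightarrow> 'h"
    and \<Delta> :: "'h \<Rightarrow> ('h \<times> 'h) list" and \<epsilon> :: "'h \<Rightarrow> 'k" and S :: "'h \<Rightarrow> 'h" +
  fixes \<sigma> :: "'h \<Rightarrow> 'h \<Rightarrow> 'k"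
  assumes cqt: "cqt sc \<Delta> \<epsilon> \<sigma>"
begin

lemma lin_fun_sigma_fst: "lin_fun sc (\<lambda>h. \<sigma> h g)"
  and lin_fun_sigma_snd: "lin_fun sc (\<lambda>g. \<sigma> h g)"
  and sigma_mult_left: "\<sigma> (h * h') g = sw2 g (\<lambda>g1 g2. \<sigma> h g1 * \<sigma> h' g2)"
  and sigma_mult_right: "\<sigma> g (h * h') = sw2 g (\<lambda>g1 g2. \<sigma> g2 h * \<sigma> g1 h')"
  and sigma_one_left: "\<sigma> 1 h = \<epsilon> h"
  and sigma_one_right: "\<sigma> h 1 = \<epsilon> h"
  and sigma_braiding_sum:
    "(\<Sum>(h1,h2)\<leftarrow>\<Delta> h. \<Sum>(k1,k2)\<leftarrow>\<Delta> k. sc (\<sigma> h1 k1) (h2 * k2))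
     = (\<Sum>(h1,h2)\<leftarrow>\<Delta> h. \<Sum>(k1,k2)\<leftarrow>\<Delta> k. sc (\<sigma> h2 k2) (k1 * h1))"
  using cqt unfolding cqt_def bilin_def sw2_def by blast+

lemma lin_fun_sigma_fst_comp [lin_intros]: "lin_endo sc g \<Longrightarrow> lin_fun sc (\<lambda>a. \<sigma> (g a) c)"
  using lin_fun_comp[OF lin_fun_sigma_fst] .

lemma lin_fun_sigma_snd_comp [lin_intros]: "lin_endo sc g \<Longrightarrow> lin_fun sc (\<lambda>a. \<sigma> c (g a))"
  using lin_fun_comp[OF lin_fun_sigma_snd] .

lemma sigma_braiding:
  assumes f: "lin_fun sc f"
  shows "sw2 h (\<lambda>h1 h2. sw2 k (\<lambda>k1 k2. \<sigma> h1 k1 * f (h2 * k2)))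
       = sw2 h (\<lambda>h1 h2. sw2 k (\<lambda>k1 k2. \<sigma> h2 k2 * f (k1 * h1)))"
  using arg_cong[OF sigma_braiding_sum[where h=h and k=k], of f]
  by (simp add: sw2_def lin_fun_sum_list[OF f] lin_fun_scale[OF f] split_def)

lemma conv_sigma: "conv \<Delta> (\<sigma> h') (\<sigma> h) = \<sigma> (h' * h)"
  by (rule ext) (simp add: conv_eq_sw2 sigma_mult_left)

lemma sigma_one: "\<sigma> 1 = \<epsilon>"
  by (rule ext) (simp add: sigma_one_left)

lemma sigma_mult_left_Sinv2:
  "\<sigma> (h * h') (Sinv (Sinv v)) = sw2 v (\<lambda>p q. \<sigma> h (Sinv (Sinv p)) * \<sigma> h' (Sinv (Sinv q)))"
  by (simp add: sigma_mult_left sw2_Sinv_Sinv lin_intros)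

section \<open>The map \<open>\<theta>\<close> and the coaction\<close>

abbreviation \<theta> :: "'h \<Rightarrow> 'h \<Rightarrow> 'h" where "\<theta> \<equiv> theta sc \<Delta> \<sigma> S"

lemma lin_theta: "lin_fun sc \<psi> \<Longrightarrow> \<psi> (\<theta> x h) = sw2 x (\<lambda>x1 x2. \<sigma> h (Sinv (Sinv x2)) * \<psi> x1)"
  by (simp add: theta_def evD_def thetaL_def lmap_def lin_fun_sum_list lin_fun_scale sw2_def split_def comp_def)

lemma lin_theta_arg: "lin_fun sc \<psi> \<Longrightarrow> lin_fun sc (\<lambda>x. \<psi> (\<theta> x h))"
  by (simp add: lin_theta lin_fun_sw2 lin_intros)

lemma theta_add: "\<theta> (x + y) h = \<theta> x h + \<theta> y h"
proof (rule lin_fun_separates)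
  fix \<psi> assume "lin_fun sc \<psi>"
  from lin_fun_add[OF lin_theta_arg[OF this]] lin_fun_add[OF this]
  show "\<psi> (\<theta> (x + y) h) = \<psi> (\<theta> x h + \<theta> y h)" by simp
qed

lemma theta_scale: "\<theta> (sc c x) h = sc c (\<theta> x h)"
proof (rule lin_fun_separates)
  fix \<psi> assume "lin_fun sc \<psi>"
  from lin_fun_scale[OF lin_theta_arg[OF this]] lin_fun_scale[OF this]
  show "\<psi> (\<theta> (sc c x) h) = \<psi> (sc c (\<theta> x h))" by simp
qed

lemma theta_at_one: "\<theta> x 1 = x"
proof (rule lin_fun_separates)
  fix \<psi> assume \<psi>: "lin_fun sc \<psi>"
  have "\<psi> (\<theta> x 1) = sw2 x (\<lambda>x1 x2. \<psi> x1 * \<epsilon> x2)"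
    by (simp add: lin_theta[OF \<psi>] sigma_one_left counit_Sinv mult.commute)
  then show "\<psi> (\<theta> x 1) = \<psi> x" by (simp add: sw2_counit_right[OF \<psi>])
qed

lemma inj_theta: "inj \<theta>"
  by (rule injI) (metis theta_at_one)

lemma coactB_theta:
  "coactB sc \<Delta> \<sigma> S (thetaL \<Delta> \<sigma> (inv S) y) h h'
   = (\<Sum>(y1,y2,y3)\<leftarrow>delta2 \<Delta> y. sc (\<sigma> h (inv S y1 * inv S (inv S y3))) (\<theta> y2 h'))"
proof (rule lin_fun_separates)
  fix \<psi> assume \<psi>: "lin_fun sc \<psi>"
  note L = lin_intros \<psi> lin_fun_comp[OF \<psi>]
  have "\<psi> (coactB sc \<Delta> \<sigma> S (thetaL \<Delta> \<sigma> (inv S) y) h h')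
      = sw3 y (\<lambda>x1 x2 v. sw2 h (\<lambda>h1 h2. \<sigma> (h' * h1) (Sinv (Sinv v)) * \<sigma> h2 (Sinv x1) * \<psi> x2))"
    by (simp add: coactB_def thetaL_def lmap_def lin_fun_sum_list[OF \<psi>] lin_fun_scale[OF \<psi>]
        sw3_def sw2_def split_def comp_def)
  also have "\<dots> = sw3 y (\<lambda>x1 x2 v. sw2 v (\<lambda>p q. \<sigma> h' (Sinv (Sinv p)) * \<sigma> h (Sinv x1 * Sinv (Sinv q)) * \<psi> x2))"
    unfolding sigma_mult_left_Sinv2 sigma_mult_right
    by (simp add: sw3_def sw2_def sum_list_mult_const[symmetric] sum_list_const_mult[symmetric] split_def
        sum_list_map_commute[where L="\<Delta> h"] mult_ac)
  also have "\<dots> = sw4 y (\<lambda>y1 a b y3. \<sigma> h (Sinv y1 * Sinv (Sinv y3)) * (\<sigma> h' (Sinv (Sinv b)) * \<psi> a))"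
    by (subst sw3_expand_3) (intro L, simp add: mult_ac)
  also have "\<dots> = sw3 y (\<lambda>y1 y2 y3. sw2 y2 (\<lambda>a b. \<sigma> h (Sinv y1 * Sinv (Sinv y3)) * (\<sigma> h' (Sinv (Sinv b)) * \<psi> a)))"
    by (rule sw3_expand_2[symmetric]) (intro L)
  also have "\<dots> = \<psi> (\<Sum>(y1,y2,y3)\<leftarrow>delta2 \<Delta> y. sc (\<sigma> h (inv S y1 * inv S (inv S y3))) (\<theta> y2 h'))"
    unfolding lin_fun_sum_list_triples[OF \<psi>] lin_fun_scale[OF \<psi>] lin_theta[OF \<psi>] sum_delta2_eq
    by (simp add: sw2_def sum_list_const_mult[symmetric] split_def)
  finally show "\<psi> (coactB sc \<Delta> \<sigma> S (thetaL \<Delta> \<sigma> (inv S) y) h h')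
      = \<psi> (\<Sum>(y1,y2,y3)\<leftarrow>delta2 \<Delta> y. sc (\<sigma> h (inv S y1 * inv S (inv S y3))) (\<theta> y2 h'))" .
qed

section \<open>The action on \<open>X\<close>\<close>

abbreviation act :: "('h \<Rightarrow> 'k) \<Rightarrow> 'h \<Rightarrow> 'h" where "act \<equiv> actX sc \<Delta> S"
abbreviation coact :: "'h \<Rightarrow> 'h \<Rightarrow> 'h" where "coact \<equiv> coactX sc \<Delta> \<sigma> S"

lemma lin_actX:
  assumes "lin_fun sc \<chi>"
  shows "\<chi> (act \<phi> y) = sw3 y (\<lambda>a b c. \<phi> (Sinv a * Sinv (Sinv c)) * \<chi> b)"
  unfolding actX_def lin_fun_sum_list_triples[OF assms] lin_fun_scale[OF assms] sum_delta2_eq ..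

lemma lin_actX_arg:
  assumes \<phi>: "lin_fun sc \<phi>" and \<chi>: "lin_fun sc \<chi>"
  shows "lin_fun sc (\<lambda>y. \<chi> (act \<phi> y))"
  unfolding lin_actX[OF \<chi>] by (intro lin_intros lin_fun_sw3 \<chi> lin_fun_comp[OF \<phi>])

lemma coactX_eq_actX: "coact y h = act (\<sigma> h) y"
  by (simp add: coactX_def actX_def)

lemma actX_add: "lin_fun sc \<phi> \<Longrightarrow> act \<phi> (y + z) = act \<phi> y + act \<phi> z"
proof (rule lin_fun_separates)
  fix \<chi> assume "lin_fun sc \<phi>" "lin_fun sc \<chi>"
  from lin_fun_add[OF lin_actX_arg[OF this]] lin_fun_add[OF this(2)]
  show "\<chi> (act \<phi> (y + z)) = \<chi> (act \<phi> y + act \<phi> z)" by simp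
qed

lemma actX_scale: "lin_fun sc \<phi> \<Longrightarrow> act \<phi> (sc k y) = sc k (act \<phi> y)"
proof (rule lin_fun_separates)
  fix \<chi> assume "lin_fun sc \<phi>" "lin_fun sc \<chi>"
  from lin_fun_scale[OF lin_actX_arg[OF this]] lin_fun_scale[OF this(2)]
  show "\<chi> (act \<phi> (sc k y)) = \<chi> (sc k (act \<phi> y))" by simp
qed

lemma actX_fun_add: "act (\<lambda>h. \<phi> h + \<psi> h) y = act \<phi> y + act \<psi> y"
  by (rule lin_fun_separates)
    (simp add: lin_actX lin_fun_add sw3_def sw2_def distrib_right sum_list_addf split_def)

lemma actX_fun_scale: "act (\<lambda>h. k * \<phi> h) y = sc k (act \<phi> y)"
  by (rule lin_fun_separates)
    (simp add: lin_actX lin_fun_scale sw3_def sw2_def sum_list_const_mult[symmetric] split_def mult.assoc)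

lemma actX_counit: "act \<epsilon> y = y"
proof (rule lin_fun_separates)
  fix \<chi> assume \<chi>: "lin_fun sc \<chi>"
  have "\<chi> (act \<epsilon> y) = sw3 y (\<lambda>a b c. \<epsilon> a * (\<chi> b * \<epsilon> c))"
    by (simp add: lin_actX[OF \<chi>] counit_mult counit_Sinv mult_ac)
  also have "\<dots> = \<chi> y"
    by (subst sw3_counit_1) (intro lin_intros \<chi>, rule sw2_counit_right[OF \<chi>])
  finally show "\<chi> (act \<epsilon> y) = \<chi> y" .
qed

lemma sw2_twist:
  assumes F: "bilin sc F"
  shows "sw2 (Sinv a * Sinv (Sinv c)) F
       = sw2 a (\<lambda>p q. sw2 c (\<lambda>r s. F (Sinv q * Sinv (Sinv r)) (Sinv p * Sinv (Sinv s))))"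
proof -
  note L = lin_intros bilinD[OF F] lin_fun_comp[OF bilinD(1)[OF F]] lin_fun_comp[OF bilinD(2)[OF F]]
  have "sw2 (Sinv a * Sinv (Sinv c)) F = sw2 (Sinv a) (\<lambda>a1 a2. sw2 (Sinv (Sinv c)) (\<lambda>b1 b2. F (a1 * b1) (a2 * b2)))"
    by (rule sw2_mult[OF F])
  also have "\<dots> = sw2 a (\<lambda>p q. sw2 (Sinv (Sinv c)) (\<lambda>b1 b2. F (Sinv q * b1) (Sinv p * b2)))"
    by (rule sw2_Sinv) (intro L)
  also have "\<dots> = sw2 a (\<lambda>p q. sw2 c (\<lambda>r s. F (Sinv q * Sinv (Sinv r)) (Sinv p * Sinv (Sinv s))))"
    by (rule sw2_cong, rule sw2_Sinv_Sinv) (intro L)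
  finally show ?thesis .
qed

lemma sw3_sw2_twist:
  assumes G: "trilin sc G"
  shows "sw3 y (\<lambda>a b c. sw2 (Sinv a * Sinv (Sinv c)) (\<lambda>k1 k2. G k1 b k2))
       = sw5 y (\<lambda>p q b r s. G (Sinv q * Sinv (Sinv r)) b (Sinv p * Sinv (Sinv s)))"
proof -
  note L = lin_intros trilinD[OF G] lin_fun_comp[OF trilinD(1)[OF G]] lin_fun_comp[OF trilinD(2)[OF G]]
    lin_fun_comp[OF trilinD(3)[OF G]]
  have "sw3 y (\<lambda>a b c. sw2 (Sinv a * Sinv (Sinv c)) (\<lambda>k1 k2. G k1 b k2))
      = sw3 y (\<lambda>a b c. sw2 a (\<lambda>p q. sw2 c (\<lambda>r s. G (Sinv q * Sinv (Sinv r)) b (Sinv p * Sinv (Sinv s)))))"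
    by (subst sw2_twist) (intro L, rule refl)
  also have "\<dots> = sw5 y (\<lambda>p q b r s. G (Sinv q * Sinv (Sinv r)) b (Sinv p * Sinv (Sinv s)))"
    by (subst sw3_expand_1, rule sw4_expand_4) (intro L)
  finally show ?thesis .
qed

lemma actX_conv:
  assumes \<phi>: "lin_fun sc \<phi>" and \<psi>: "lin_fun sc \<psi>"
  shows "act (conv \<Delta> \<phi> \<psi>) y = act \<phi> (act \<psi> y)"
proof (rule lin_fun_separates)
  fix \<chi> assume \<chi>: "lin_fun sc \<chi>"
  note L = lin_intros \<chi> \<phi> \<psi> lin_fun_comp[OF \<phi>] lin_fun_comp[OF \<psi>]
  have "\<chi> (act (conv \<Delta> \<phi> \<psi>) y) = sw3 y (\<lambda>a b c. sw2 (Sinv a * Sinv (Sinv c)) (\<lambda>k1 k2. \<phi> k1 * \<psi> k2 * \<chi> b))"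
    by (simp add: lin_actX[OF \<chi>] conv_def sw2_def sum_list_mult_const[symmetric] split_def)
  also have "\<dots> = sw5 y (\<lambda>a x y z c. \<psi> (Sinv a * Sinv (Sinv c)) * (\<phi> (Sinv x * Sinv (Sinv z)) * \<chi> y))"
    by (subst sw3_sw2_twist) (intro L, simp add: mult_ac)
  also have "\<dots> = sw3 y (\<lambda>a b c. sw3 b (\<lambda>x y z. \<psi> (Sinv a * Sinv (Sinv c)) * (\<phi> (Sinv x * Sinv (Sinv z)) * \<chi> y)))"
    by (rule sw3_expand_2_sw3[symmetric]) (intro L)
  also have "\<dots> = sw3 y (\<lambda>a b c. \<psi> (Sinv a * Sinv (Sinv c)) * sw3 b (\<lambda>x y z. \<phi> (Sinv x * Sinv (Sinv z)) * \<chi> y))"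
    by (simp add: sw3_def sw2_def sum_list_const_mult[symmetric] split_def)
  also have "\<dots> = \<chi> (act \<phi> (act \<psi> y))"
    using lin_actX[OF \<chi>, of \<phi>] lin_actX[OF lin_fun_sw3[of "\<lambda>a b c. \<phi> (Sinv a * Sinv (Sinv c)) * \<chi> b"]]
    by (simp add: L)
  finally show "\<chi> (act (conv \<Delta> \<phi> \<psi>) y) = \<chi> (act \<phi> (act \<psi> y))" .
qed

text \<open>
  As \<open>coact y h = act (\<sigma> h) y\<close> and \<open>act\<close> is multiplicative, both sides are actions of
  convolutions of \<open>\<phi>\<close> with \<open>\<sigma>\<close>; these agree by the braiding axiom of \<open>\<sigma>\<close>.
\<close>

lemma actX_coactX_compatible:
  assumes \<phi>: "lin_fun sc \<phi>"
  shows "(\<Sum>(h1,h2)\<leftarrow>\<Delta> h. act (\<lambda>w. \<phi> (w * h1)) (coact y h2))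
       = (\<Sum>(h1,h2)\<leftarrow>\<Delta> h. coact (act (\<lambda>w. \<phi> (h2 * w)) y) h1)"
proof (rule lin_fun_separates)
  fix \<chi> assume \<chi>: "lin_fun sc \<chi>"
  note L = lin_intros \<chi> \<phi> lin_fun_comp[OF \<phi>] lin_fun_sigma_fst lin_fun_sigma_snd
  have \<phi>1: "lin_fun sc (\<lambda>w. \<phi> (w * h1))" for h1 by (intro L)
  have \<phi>2: "lin_fun sc (\<lambda>w. \<phi> (h2 * w))" for h2 by (intro L)
  have "\<chi> (\<Sum>(h1,h2)\<leftarrow>\<Delta> h. act (\<lambda>w. \<phi> (w * h1)) (coact y h2))
      = sw2 h (\<lambda>h1 h2. sw3 y (\<lambda>a b c. sw2 (Sinv a * Sinv (Sinv c)) (\<lambda>k1 k2. \<phi> (k1 * h1) * \<sigma> h2 k2 * \<chi> b)))"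
    unfolding lin_fun_sum_list_pairs[OF \<chi>] sw2_def[symmetric] coactX_eq_actX
      actX_conv[OF \<phi>1 lin_fun_sigma_snd, symmetric]
    by (simp add: lin_actX[OF \<chi>] conv_def sw2_def sum_list_mult_const[symmetric] split_def)
  also have "\<dots> = sw3 y (\<lambda>a b c. sw2 h (\<lambda>h1 h2. sw2 (Sinv a * Sinv (Sinv c)) (\<lambda>k1 k2. \<phi> (k1 * h1) * \<sigma> h2 k2 * \<chi> b)))"
    by (rule sw3_sw2_commute[symmetric])
  also have "\<dots> = sw3 y (\<lambda>a b c. sw2 h (\<lambda>h1 h2. sw2 (Sinv a * Sinv (Sinv c)) (\<lambda>k1 k2. \<sigma> h1 k1 * \<phi> (h2 * k2) * \<chi> b)))"
    using sigma_braiding[of "\<lambda>t. \<phi> t * \<chi> _"] by (simp add: L mult_ac)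
  also have "\<dots> = sw2 h (\<lambda>h1 h2. sw3 y (\<lambda>a b c. sw2 (Sinv a * Sinv (Sinv c)) (\<lambda>k1 k2. \<sigma> h1 k1 * \<phi> (h2 * k2) * \<chi> b)))"
    by (rule sw3_sw2_commute)
  also have "\<dots> = \<chi> (\<Sum>(h1,h2)\<leftarrow>\<Delta> h. coact (act (\<lambda>w. \<phi> (h2 * w)) y) h1)"
    unfolding lin_fun_sum_list_pairs[OF \<chi>] sw2_def[symmetric] coactX_eq_actX
      actX_conv[OF lin_fun_sigma_snd \<phi>2, symmetric]
    by (simp add: lin_actX[OF \<chi>] conv_def sw2_def sum_list_mult_const[symmetric] split_def)
  finally show "\<chi> (\<Sum>(h1,h2)\<leftarrow>\<Delta> h. act (\<lambda>w. \<phi> (w * h1)) (coact y h2))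
      = \<chi> (\<Sum>(h1,h2)\<leftarrow>\<Delta> h. coact (act (\<lambda>w. \<phi> (h2 * w)) y) h1)" .
qed

section \<open>The action on \<open>B\<close>\<close>

abbreviation lr :: "'h \<Rightarrow> 'h \<Rightarrow> 'h \<Rightarrow> 'k" where "lr x a \<equiv> conv \<Delta> (lmap \<sigma> x) (rmap \<sigma> a)"

lemma lin_lr: "lin_fun sc (lr x a)"
  by (rule lin_conv) (simp_all add: lmap_def rmap_def lin_fun_sigma_fst lin_fun_sigma_snd)

lemma lr_comult:
  "sw2 x (\<lambda>x1 x2. sw2 a (\<lambda>a1 a2. lr x2 a1 U * lr x1 a2 V)) = lr x a (V * U)"
proof -
  note L = lin_intros lin_fun_sigma_fst lin_fun_sigma_snd
  have "sw2 x (\<lambda>x1 x2. sw2 a (\<lambda>a1 a2. lr x2 a1 U * lr x1 a2 V))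
      = sw2 x (\<lambda>x1 x2. sw2 a (\<lambda>a1 a2. sw2 V (\<lambda>v1 v2. sw2 U (\<lambda>u1 u2. \<sigma> u1 x2 * \<sigma> a1 u2 * (\<sigma> v1 x1 * \<sigma> a2 v2)))))"
    unfolding conv_eq_sw2 lmap_def rmap_def sw2_mult_sw2 by (intro sw2_cong sw2_commute)
  also have "\<dots> = sw2 V (\<lambda>v1 v2. sw2 U (\<lambda>u1 u2. sw2 x (\<lambda>x1 x2. sw2 a (\<lambda>a1 a2. \<sigma> u1 x2 * \<sigma> a1 u2 * (\<sigma> v1 x1 * \<sigma> a2 v2)))))"
    by (subst sw2_nested_commute, rule sw2_cong, rule sw2_nested_commute)
  also have "\<dots> = sw2 V (\<lambda>v1 v2. sw2 U (\<lambda>u1 u2. sw2 x (\<lambda>x1 x2. \<sigma> v1 x1 * \<sigma> u1 x2) * sw2 a (\<lambda>a1 a2. \<sigma> a2 v2 * \<sigma> a1 u2)))"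
    by (intro sw2_cong) (subst sw2_mult_sw2, intro sw2_cong, simp add: mult_ac)
  also have "\<dots> = sw2 V (\<lambda>v1 v2. sw2 U (\<lambda>u1 u2. \<sigma> (v1 * u1) x * \<sigma> a (v2 * u2)))"
    by (simp add: sigma_mult_left sigma_mult_right)
  also have "\<dots> = lr x a (V * U)"
    unfolding conv_eq_sw2 lmap_def rmap_def by (rule sw2_mult[symmetric]) (intro L)
  finally show ?thesis .
qed

lemma sigma_conjugation:
  assumes f: "lin_fun sc f"
  shows "sw2 V (\<lambda>v1 v2. sw3 h (\<lambda>h1 h2 h3. f (Sinv h3 * v1 * h1) * \<sigma> h2 v2))
       = sw2 V (\<lambda>v1 v2. \<sigma> h v1 * f v2)"
proof -
  note L = lin_intros f lin_fun_comp[OF f] lin_fun_sigma_fst lin_fun_sigma_snd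
  have "sw2 V (\<lambda>v1 v2. sw3 h (\<lambda>h1 h2 h3. f (Sinv h3 * v1 * h1) * \<sigma> h2 v2))
      = sw2 h (\<lambda>u h3. sw2 u (\<lambda>h1 h2. sw2 V (\<lambda>v1 v2. \<sigma> h2 v2 * f (Sinv h3 * (v1 * h1)))))"
    unfolding sw3_def by (subst sw2_commute, intro sw2_cong, subst sw2_commute) (simp add: mult_ac)
  also have "\<dots> = sw2 h (\<lambda>u h3. sw2 u (\<lambda>h1 h2. sw2 V (\<lambda>v1 v2. \<sigma> h1 v1 * f (Sinv h3 * (h2 * v2)))))"
    by (rule sw2_cong, rule sigma_braiding[symmetric]) (intro L)
  also have "\<dots> = sw2 h (\<lambda>h1 w. sw2 w (\<lambda>h2 h3. sw2 V (\<lambda>v1 v2. \<sigma> h1 v1 * f (Sinv h3 * h2 * v2))))"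
    by (subst sw2_expand_2) (intro L, simp add: sw3_def mult.assoc)
  also have "\<dots> = sw2 h (\<lambda>h1 w. sw2 V (\<lambda>v1 v2. \<sigma> h1 v1 * f v2) * \<epsilon> w)"
    using sw2_Sinv_antipode_left[of "\<lambda>t. sw2 V (\<lambda>v1 v2. \<sigma> _ v1 * f (t * v2))"]
    by (intro sw2_cong) (simp add: L mult.commute)
  also have "\<dots> = sw2 V (\<lambda>v1 v2. \<sigma> h v1 * f v2)"
    by (rule sw2_counit_right[of "\<lambda>h1. sw2 V (\<lambda>v1 v2. \<sigma> h1 v1 * f v2)"]) (intro L)
  finally show ?thesis .
qed

lemma lin_evD: "lin_fun sc \<chi> \<Longrightarrow> \<chi> (evD sc L h) = (\<Sum>(m,y)\<leftarrow>L. m h * \<chi> y)"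
  by (simp add: evD_def lin_fun_sum_list lin_fun_scale split_def)

lemma lin_evD_iD_mult_iD:
  assumes \<chi>: "lin_fun sc \<chi>" and F1: "lin_fun sc F1" and F2: "lin_fun sc F2"
    and L: "\<And>n y. (n, y) \<in> set L \<Longrightarrow> lin_fun sc n"
  shows "\<chi> (evD sc (multD \<Delta> Sinv (multD \<Delta> Sinv (iD F1) L) (iD F2)) h)
       = (\<Sum>(n,y)\<leftarrow>L. sw3 y (\<lambda>p q r. sw3 h (\<lambda>h1 h2 h3. F1 h1 * n h2 * F2 (Sinv r * h3 * p) * \<chi> q)))"
proof -
  have "\<chi> (evD sc (multD \<Delta> Sinv (multD \<Delta> Sinv (iD F1) L) (iD F2)) h)
      = (\<Sum>(n,y)\<leftarrow>L. sw3 1 (\<lambda>p q r. sw3 (q * y) (\<lambda>x1 x2 x3.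
          conv \<Delta> (conv \<Delta> F1 (\<lambda>b. n (Sinv r * b * p))) (\<lambda>b. F2 (Sinv x3 * b * x1)) h * \<chi> x2)))"
    by (simp add: lin_evD[OF \<chi>] multD_def iD_def sum_list_map_concat sum_delta2_eq[symmetric] split_def comp_def)
  also have "\<dots> = (\<Sum>(n,y)\<leftarrow>L. sw3 y (\<lambda>p q r. sw3 h (\<lambda>h1 h2 h3. F1 h1 * n h2 * F2 (Sinv r * h3 * p) * \<chi> q)))"
  proof (intro arg_cong[where f=sum_list] map_cong refl, clarify)
    fix n y assume "(n, y) \<in> set L"
    note lin = lin_intros \<chi> F1 F2 L[OF this] lin_fun_comp[OF F1] lin_fun_comp[OF F2] lin_fun_comp[OF L[OF this]]
    have "sw3 1 (\<lambda>p q r. sw3 (q * y) (\<lambda>x1 x2 x3.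
          conv \<Delta> (conv \<Delta> F1 (\<lambda>b. n (Sinv r * b * p))) (\<lambda>b. F2 (Sinv x3 * b * x1)) h * \<chi> x2))
        = sw3 (1 * y) (\<lambda>x1 x2 x3. conv \<Delta> (conv \<Delta> F1 (\<lambda>b. n (Sinv 1 * b * 1))) (\<lambda>b. F2 (Sinv x3 * b * x1)) h * \<chi> x2)"
      unfolding conv_eq_sw2 by (rule sw3_one) (intro lin)
    then show "sw3 1 (\<lambda>p q r. sw3 (q * y) (\<lambda>x1 x2 x3.
          conv \<Delta> (conv \<Delta> F1 (\<lambda>b. n (Sinv r * b * p))) (\<lambda>b. F2 (Sinv x3 * b * x1)) h * \<chi> x2))
        = sw3 y (\<lambda>p q r. sw3 h (\<lambda>h1 h2 h3. F1 h1 * n h2 * F2 (Sinv r * h3 * p) * \<chi> q))"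
      by (simp add: Sinv_one conv_eq_sw2 sw3_def sw2_def sum_list_mult_const[symmetric] split_def)
  qed
  finally show ?thesis .
qed

lemma sum_product_sw2:
  "(\<Sum>((x1,x2),(a1,a2))\<leftarrow>List.product (\<Delta> x) (\<Delta> a). G x1 x2 a1 a2) = sw2 x (\<lambda>x1 x2. sw2 a (G x1 x2))"
  by (simp add: product_concat_map sum_list_map_concat sw2_def split_def comp_def)

lemma lin_evD_actB:
  assumes \<chi>: "lin_fun sc \<chi>"
  shows "\<chi> (evD sc (actB \<Delta> \<sigma> S x a (thetaL \<Delta> \<sigma> (inv S) y)) h)
       = sw2 y (\<lambda>y1 y2. sw3 y1 (\<lambda>p q r. sw3 h (\<lambda>h1 h2 h3.
           lr x a (Sinv (Sinv r * h3 * p) * h1) * (\<sigma> h2 (Sinv (Sinv y2)) * \<chi> q))))"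
proof -
  note L = lin_intros \<chi> lin_lr lin_fun_comp[OF lin_lr] lin_fun_sigma_fst lin_fun_sigma_snd
  have "\<chi> (evD sc (actB \<Delta> \<sigma> S x a (thetaL \<Delta> \<sigma> (inv S) y)) h)
      = sw2 x (\<lambda>x1 x2. sw2 a (\<lambda>a1 a2. \<chi> (evD sc (multD \<Delta> Sinv (multD \<Delta> Sinv (iD (lr x2 a1))
          (thetaL \<Delta> \<sigma> (inv S) y)) (iD (\<lambda>w. lr x1 a2 (Sinv w)))) h)))"
    unfolding actB_def lin_evD[OF \<chi>] sum_list_map_concat sum_product_sw2[symmetric]
    by (simp add: split_def comp_def)
  also have "\<dots> = sw2 x (\<lambda>x1 x2. sw2 a (\<lambda>a1 a2. sw2 y (\<lambda>y1 y2. sw3 y1 (\<lambda>p q r. sw3 h (\<lambda>h1 h2 h3.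
      lr x2 a1 h1 * \<sigma> h2 (Sinv (Sinv y2)) * lr x1 a2 (Sinv (Sinv r * h3 * p)) * \<chi> q)))))"
    by (intro sw2_cong, subst lin_evD_iD_mult_iD[OF \<chi> lin_lr lin_fun_comp[OF lin_lr]])
      (auto intro: lin_intros simp: thetaL_def lmap_def lin_fun_sigma_fst sw2_def split_def comp_def)
  also have "\<dots> = sw2 y (\<lambda>y1 y2. sw3 y1 (\<lambda>p q r. sw3 h (\<lambda>h1 h2 h3. sw2 x (\<lambda>x1 x2. sw2 a (\<lambda>a1 a2.
      lr x2 a1 h1 * lr x1 a2 (Sinv (Sinv r * h3 * p)) * (\<sigma> h2 (Sinv (Sinv y2)) * \<chi> q))))))"
    by (subst sw2_nested_commute, intro sw2_cong, subst sw3_nested_commute, simp only: sw3_nested_commute mult_ac)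
  also have "\<dots> = sw2 y (\<lambda>y1 y2. sw3 y1 (\<lambda>p q r. sw3 h (\<lambda>h1 h2 h3.
      lr x a (Sinv (Sinv r * h3 * p) * h1) * (\<sigma> h2 (Sinv (Sinv y2)) * \<chi> q))))"
  proof -
    have "sw2 x (\<lambda>x1 x2. sw2 a (\<lambda>a1 a2. lr x2 a1 U * lr x1 a2 V * c)) = lr x a (V * U) * c" for U V c
      by (simp only: lr_comult[symmetric]) (simp add: sw2_def sum_list_mult_const split_def)
    then show ?thesis by (simp only:)
  qed
  finally show ?thesis .
qed

lemma lin_theta_actX:
  assumes \<phi>: "lin_fun sc \<phi>" and \<chi>: "lin_fun sc \<chi>"
  shows "sw2 y (\<lambda>y1 y2. sw3 y1 (\<lambda>p q r. sw3 h (\<lambda>h1 h2 h3.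
           \<phi> (Sinv (Sinv r * h3 * p) * h1) * (\<sigma> h2 (Sinv (Sinv y2)) * \<chi> q))))
       = \<chi> (\<theta> (act \<phi> y) h)"
proof -
  note L = lin_intros \<chi> \<phi> lin_fun_comp[OF \<phi>] lin_fun_sigma_fst lin_fun_sigma_snd
  have "sw2 y (\<lambda>y1 y2. sw3 y1 (\<lambda>p q r. sw3 h (\<lambda>h1 h2 h3.
           \<phi> (Sinv (Sinv r * h3 * p) * h1) * (\<sigma> h2 (Sinv (Sinv y2)) * \<chi> q))))
      = sw3 y (\<lambda>p q z. sw2 z (\<lambda>r w. sw3 h (\<lambda>h1 h2 h3.
           \<phi> (Sinv p * (Sinv h3 * Sinv (Sinv r) * h1)) * \<sigma> h2 (Sinv (Sinv w)) * \<chi> q)))"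
    by (subst sw3_expand_3) (intro L, simp add: sw4_def Sinv_mult mult_ac)
  also have "\<dots> = sw3 y (\<lambda>p q z. sw2 (Sinv (Sinv z)) (\<lambda>v1 v2.
           sw3 h (\<lambda>h1 h2 h3. (\<phi> (Sinv p * (Sinv h3 * v1 * h1)) * \<chi> q) * \<sigma> h2 v2)))"
    by (subst sw2_Sinv_Sinv) (intro L, simp add: mult_ac)
  also have "\<dots> = sw3 y (\<lambda>p q z. sw2 (Sinv (Sinv z)) (\<lambda>v1 v2. \<sigma> h v1 * (\<phi> (Sinv p * v2) * \<chi> q)))"
    by (subst sigma_conjugation) (intro L, rule refl)
  also have "\<dots> = sw3 y (\<lambda>a b c. sw2 b (\<lambda>b1 b2. \<phi> (Sinv a * Sinv (Sinv c)) * (\<sigma> h (Sinv (Sinv b2)) * \<chi> b1)))"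
    by (subst sw2_Sinv_Sinv, intro L, subst sw3_expand_3, intro L, subst sw3_expand_2, intro L)
      (simp add: mult_ac)
  also have "\<dots> = sw3 y (\<lambda>a b c. \<phi> (Sinv a * Sinv (Sinv c)) * \<chi> (\<theta> b h))"
    by (simp add: lin_theta[OF \<chi>] sw2_def sum_list_const_mult[symmetric] split_def)
  also have "\<dots> = \<chi> (\<theta> (act \<phi> y) h)"
    by (rule lin_actX[symmetric]) (rule lin_theta_arg[OF \<chi>])
  finally show ?thesis .
qed

lemma actB_theta:
  "evD sc (actB \<Delta> \<sigma> S x a (thetaL \<Delta> \<sigma> (inv S) y)) = \<theta> (act (lr x a) y)"
proof
  fix h
  show "evD sc (actB \<Delta> \<sigma> S x a (thetaL \<Delta> \<sigma> (inv S) y)) h = \<theta> (act (lr x a) y) h"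
    by (rule lin_fun_separates) (simp add: lin_evD_actB lin_theta_actX[OF lin_lr])
qed

section \<open>The subalgebra \<open>B\<close>\<close>

abbreviation thetaL_rep :: "('h \<times> 'h) list \<Rightarrow> (('h \<Rightarrow> 'k) \<times> 'h) list" where
  "thetaL_rep L \<equiv> map (\<lambda>(x1,x2). (lmap \<sigma> (Sinv (Sinv x2)), x1)) L"

lemma evD_thetaL_rep:
  assumes L: "\<And>F. bilin sc F \<Longrightarrow> sw2 x F = (\<Sum>(a,b)\<leftarrow>L. F a b)"
  shows "evD sc (thetaL_rep L) = \<theta> x"
proof
  fix h
  show "evD sc (thetaL_rep L) h = \<theta> x h"
  proof (rule lin_fun_separates)
    fix \<chi> assume \<chi>: "lin_fun sc \<chi>"
    have "\<chi> (evD sc (thetaL_rep L) h) = (\<Sum>(x1,x2)\<leftarrow>L. \<sigma> h (Sinv (Sinv x2)) * \<chi> x1)"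
      by (simp add: lin_evD[OF \<chi>] lmap_def split_def comp_def)
    also have "\<dots> = \<chi> (\<theta> x h)"
      by (simp add: lin_theta[OF \<chi>] L lin_intros \<chi>)
    finally show "\<chi> (evD sc (thetaL_rep L) h) = \<chi> (\<theta> x h)" .
  qed
qed

lemma B_equation_thetaL_rep:
  assumes L: "\<And>F. bilin sc F \<Longrightarrow> sw2 x F = (\<Sum>(a,b)\<leftarrow>L. F a b)"
  shows "B_lhs sc \<Delta> \<sigma> (inv S) (thetaL_rep L) h h' = B_rhs sc \<epsilon> (thetaL_rep L) h h'"
proof (rule lin_fun_separates)
  fix \<chi> assume \<chi>: "lin_fun sc \<chi>"
  note lin = lin_intros \<chi> lin_fun_sigma_fst lin_fun_sigma_snd
  have "\<chi> (B_lhs sc \<Delta> \<sigma> (inv S) (thetaL_rep L) h h')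
      = (\<Sum>(u,v)\<leftarrow>L. sw2 u (\<lambda>x1 x2. sw2 h' (\<lambda>a b. \<sigma> (a * h) (Sinv (Sinv v)) * \<sigma> b (Sinv x2) * \<chi> x1)))"
    by (simp add: B_lhs_def lmap_def lin_fun_sum_list[OF \<chi>] lin_fun_scale[OF \<chi>] split_def comp_def sw2_def)
  also have "\<dots> = sw3 x (\<lambda>x1 x2 v. sw2 h' (\<lambda>a b. \<sigma> (a * h) (Sinv (Sinv v)) * \<sigma> b (Sinv x2) * \<chi> x1))"
    unfolding sw3_def by (rule L[symmetric]) (intro lin)
  also have "\<dots> = sw3 x (\<lambda>x1 x2 v. sw2 v (\<lambda>p q. \<sigma> h' (Sinv x2 * Sinv (Sinv p)) * \<sigma> h (Sinv (Sinv q)) * \<chi> x1))"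
    unfolding sigma_mult_left_Sinv2 sigma_mult_right
    by (simp add: sw3_def sw2_def sum_list_mult_const[symmetric] sum_list_const_mult[symmetric] split_def
        sum_list_map_commute[where L="\<Delta> h'"] mult_ac)
  also have "\<dots> = sw3 x (\<lambda>x1 w q. sw2 w (\<lambda>x2 p. \<sigma> h' (Sinv (Sinv p * x2)) * \<sigma> h (Sinv (Sinv q)) * \<chi> x1))"
    by (subst sw3_expand_3, intro lin, subst sw3_expand_2, intro lin) (simp add: Sinv_mult)
  also have "\<dots> = sw3 x (\<lambda>x1 w q. \<epsilon> w * (\<epsilon> h' * \<sigma> h (Sinv (Sinv q)) * \<chi> x1))"
    unfolding sw3_def
    by (intro sw2_cong, subst sw2_Sinv_antipode_left[of "\<lambda>t. \<sigma> h' (Sinv t) * \<sigma> h _ * \<chi> _"])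
      (intro lin, simp add: Sinv_one sigma_one_right)
  also have "\<dots> = sw2 x (\<lambda>x1 q. \<epsilon> h' * \<sigma> h (Sinv (Sinv q)) * \<chi> x1)"
    by (rule sw3_counit_2) (intro lin)
  also have "\<dots> = \<chi> (B_rhs sc \<epsilon> (thetaL_rep L) h h')"
    by (simp add: L lin B_rhs_def lmap_def lin_fun_sum_list[OF \<chi>] lin_fun_scale[OF \<chi>] split_def comp_def mult_ac)
  finally show "\<chi> (B_lhs sc \<Delta> \<sigma> (inv S) (thetaL_rep L) h h') = \<chi> (B_rhs sc \<epsilon> (thetaL_rep L) h h')" .
qed

lemma theta_B_lhs_collapse:
  assumes m: "lin_fun sc m" and \<chi>: "lin_fun sc \<chi>"
  shows "sw2 h (\<lambda>h1 h2. sw2 y (\<lambda>y1 y2. sw2 h1 (\<lambda>a b. m a * \<sigma> b (Sinv y2) * \<chi> (\<theta> y1 h2))))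
       = m h * \<chi> y"
proof -
  note L = lin_intros \<chi> m lin_fun_sigma_fst lin_fun_sigma_snd
  have "sw2 h (\<lambda>h1 h2. sw2 y (\<lambda>y1 y2. sw2 h1 (\<lambda>a b. m a * \<sigma> b (Sinv y2) * \<chi> (\<theta> y1 h2))))
      = sw3 h (\<lambda>a b c. sw3 y (\<lambda>u v w. m a * \<sigma> b (Sinv w) * \<sigma> c (Sinv (Sinv v)) * \<chi> u))"
    unfolding lin_theta[OF \<chi>] sw3_def
    by (rule sw2_cong, rule trans[OF _ sw2_commute]) (simp add: sw2_def sum_list_const_mult[symmetric] split_def mult_ac)
  also have "\<dots> = sw2 h (\<lambda>a z. sw3 y (\<lambda>u v w. sw2 z (\<lambda>b c. m a * \<sigma> b (Sinv w) * \<sigma> c (Sinv (Sinv v)) * \<chi> u)))"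
    by (subst sw2_expand_2[symmetric]) (intro L, intro sw2_cong sw3_sw2_commute[symmetric])
  also have "\<dots> = sw2 h (\<lambda>a z. sw2 y (\<lambda>u t. sw2 t (\<lambda>v w. m a * \<sigma> z (Sinv (w * Sinv v)) * \<chi> u)))"
    by (subst sw2_expand_2[symmetric]) (intro L,
        simp add: Sinv_mult sigma_mult_right sw2_def sum_list_const_mult[symmetric] sum_list_mult_const[symmetric]
          split_def mult_ac)
  also have "\<dots> = sw2 h (\<lambda>a z. sw2 y (\<lambda>u t. (m a * \<epsilon> z * \<chi> u) * \<epsilon> t))"
    using sw2_Sinv_antipode_right[of "\<lambda>s. m _ * \<sigma> _ (Sinv s) * \<chi> _"]
    by (intro sw2_cong) (simp add: L Sinv_one sigma_one_right mult_ac)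
  also have "\<dots> = sw2 h (\<lambda>a z. (m a * \<chi> y) * \<epsilon> z)"
    by (intro sw2_cong, subst sw2_counit_right) (intro L, simp add: mult_ac)
  also have "\<dots> = m h * \<chi> y"
    by (rule sw2_counit_right) (intro L)
  finally show ?thesis .
qed

lemma B_equation_imp_theta:
  assumes lin: "\<And>m y. (m, y) \<in> set L \<Longrightarrow> lin_fun sc m"
    and B: "\<And>h'. B_lhs sc \<Delta> \<sigma> (inv S) L 1 h' = B_rhs sc \<epsilon> L 1 h'"
  shows "evD sc L = \<theta> (evD sc L 1)"
proof
  fix h
  show "evD sc L h = \<theta> (evD sc L 1) h"
  proof (rule lin_fun_separates)
    fix \<chi> assume \<chi>: "lin_fun sc \<chi>"
    have \<Phi>: "lin_fun sc (\<lambda>v. \<chi> (\<theta> v h2))" for h2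
      by (rule lin_theta_arg[OF \<chi>])
    have "\<chi> (\<theta> (evD sc L 1) h) = (\<Sum>(m,y)\<leftarrow>L. m 1 * \<chi> (\<theta> y h))"
      using lin_evD[OF \<Phi>] by simp
    also have "\<dots> = sw2 h (\<lambda>h1 h2. \<epsilon> h1 * (\<Sum>(m,y)\<leftarrow>L. m 1 * \<chi> (\<theta> y h2)))"
      by (rule sw2_counit_left[symmetric])
        (simp add: lin_theta[OF \<chi>] lin_fun_sum_list_pairsI lin_intros lin_fun_sw2 \<chi>)
    also have "\<dots> = sw2 h (\<lambda>h1 h2. \<chi> (\<theta> (B_rhs sc \<epsilon> L 1 h1) h2))"
      by (simp add: B_rhs_def lin_fun_sum_list[OF \<Phi>] lin_fun_scale[OF \<Phi>]
          sum_list_const_mult[symmetric] split_def mult_ac)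
    also have "\<dots> = sw2 h (\<lambda>h1 h2. \<chi> (\<theta> (B_lhs sc \<Delta> \<sigma> (inv S) L 1 h1) h2))"
      by (simp add: B)
    also have "\<dots> = (\<Sum>(m,y)\<leftarrow>L. sw2 h (\<lambda>h1 h2. sw2 y (\<lambda>y1 y2. sw2 h1 (\<lambda>a b. m a * \<sigma> b (Sinv y2) * \<chi> (\<theta> y1 h2)))))"
      by (simp add: B_lhs_def lin_fun_sum_list[OF \<Phi>] lin_fun_scale[OF \<Phi>] sw2_def split_def
          sum_list_map_commute[where M=L])
    also have "\<dots> = (\<Sum>(m,y)\<leftarrow>L. m h * \<chi> y)"
      by (intro arg_cong[where f=sum_list] map_cong refl) (auto simp: theta_B_lhs_collapse[OF lin \<chi>])
    also have "\<dots> = \<chi> (evD sc L h)"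
      by (simp add: lin_evD[OF \<chi>])
    finally show "\<chi> (evD sc L h) = \<chi> (\<theta> (evD sc L 1) h)" by simp
  qed
qed

end

locale cqt_hopf_subalgs = cqt_hopf_alg sc \<Delta> \<epsilon> S \<sigma>
  for sc :: "'k::field \<Rightarrow> 'h::ring_1 \<Rightarrow> 'h"
    and \<Delta> :: "'h \<Rightarrow> ('h \<times> 'h) list" and \<epsilon> :: "'h \<Rightarrow> 'k" and S :: "'h \<Rightarrow> 'h"
    and \<sigma> :: "'h \<Rightarrow> 'h \<Rightarrow> 'k" +
  fixes X A :: "'h set"
  assumes sub_X: "sub_hopf sc \<Delta> S X"
    and sub_A: "sub_hopf sc \<Delta> S A"
begin

lemma X_scale: "a \<in> X \<Longrightarrow> sc c a \<in> X"
  and X_mult: "a \<in> X \<Longrightarrow> b \<in> X \<Longrightarrow> a * b \<in> X"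
  and X_comult: "x \<in> X \<Longrightarrow> \<exists>L. set L \<subseteq> X \<times> X \<and> teq2 sc L (\<Delta> x)"
  and X_antipode: "S ` X = X"
  and one_A: "1 \<in> A"
  using sub_X sub_A unfolding sub_hopf_def by blast+

lemma Sinv_mem: "x \<in> X \<Longrightarrow> Sinv x \<in> X"
  using X_antipode by (metis Sinv_S imageE)

lemma sum_list_mem: "(\<And>x. x \<in> set L \<Longrightarrow> f x \<in> X) \<Longrightarrow> (\<Sum>x\<leftarrow>L. f x) \<in> X"
  using sub_X by (induction L) (auto simp: sub_hopf_def)

lemma sw2_subcoalgebra:
  assumes "y \<in> X"
  obtains L where "set L \<subseteq> X \<times> X" "\<And>F. bilin sc F \<Longrightarrow> sw2 y F = (\<Sum>(a,b)\<leftarrow>L. F a b)"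
proof -
  obtain L where L: "set L \<subseteq> X \<times> X" "teq2 sc L (\<Delta> y)"
    using X_comult[OF assms] by blast
  show ?thesis using that[OF L(1)] teq2_sum[OF L(2)] by (simp add: sw2_def)
qed

lemma sw3_subcoalgebra:
  assumes "y \<in> X"
  obtains M where "set M \<subseteq> X \<times> X \<times> X" "\<And>G. trilin sc G \<Longrightarrow> sw3 y G = (\<Sum>(a,b,c)\<leftarrow>M. G a b c)"
proof -
  obtain L where L: "set L \<subseteq> X \<times> X" "\<And>F. bilin sc F \<Longrightarrow> sw2 y F = (\<Sum>(a,b)\<leftarrow>L. F a b)"
    using sw2_subcoalgebra[OF assms] by blast
  have "\<forall>u\<in>X. \<exists>Lu. set Lu \<subseteq> X \<times> X \<and> (\<forall>F. bilin sc F \<longrightarrow> sw2 u F = (\<Sum>(a,b)\<leftarrow>Lu. F a b))"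
    using sw2_subcoalgebra by metis
  then obtain f where f: "\<And>u. u \<in> X \<Longrightarrow> set (f u) \<subseteq> X \<times> X"
    "\<And>u F. u \<in> X \<Longrightarrow> bilin sc F \<Longrightarrow> sw2 u F = (\<Sum>(a,b)\<leftarrow>f u. F a b)"
    by metis
  define M where "M = concat (map (\<lambda>(u,c). map (\<lambda>(a,b). (a,b,c)) (f u)) L)"
  have "set M \<subseteq> X \<times> X \<times> X" using L(1) f(1) by (auto simp: M_def)
  moreover have "sw3 y G = (\<Sum>(a,b,c)\<leftarrow>M. G a b c)" if G: "trilin sc G" for G
  proof -
    have "sw3 y G = (\<Sum>(u,c)\<leftarrow>L. sw2 u (\<lambda>a b. G a b c))"
      unfolding sw3_def by (rule L(2)) (intro lin_intros; rule trilinD[OF G])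
    also have "\<dots> = (\<Sum>(u,c)\<leftarrow>L. \<Sum>(a,b)\<leftarrow>f u. G a b c)"
    proof (intro arg_cong[where f=sum_list] map_cong refl, clarify)
      fix u c assume "(u, c) \<in> set L"
      with L(1) have "u \<in> X" by auto
      moreover have "bilin sc (\<lambda>a b. G a b c)" by (intro bilinI; rule trilinD[OF G])
      ultimately show "sw2 u (\<lambda>a b. G a b c) = (\<Sum>(a,b)\<leftarrow>f u. G a b c)" by (rule f(2))
    qed
    also have "\<dots> = (\<Sum>(a,b,c)\<leftarrow>M. G a b c)"
      by (simp add: M_def sum_list_map_concat split_def comp_def)
    finally show ?thesis .
  qed
  ultimately show ?thesis using that by blast
qed

lemma actX_as_sum:
  assumes "y \<in> X"
  obtains M where "set M \<subseteq> X \<times> X \<times> X"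
    "\<And>\<phi>. lin_fun sc \<phi> \<Longrightarrow> act \<phi> y = (\<Sum>(a,b,c)\<leftarrow>M. sc (\<phi> (Sinv a * Sinv (Sinv c))) b)"
proof -
  obtain M where M: "set M \<subseteq> X \<times> X \<times> X" "\<And>G. trilin sc G \<Longrightarrow> sw3 y G = (\<Sum>(a,b,c)\<leftarrow>M. G a b c)"
    using sw3_subcoalgebra[OF assms] by blast
  have "act \<phi> y = (\<Sum>(a,b,c)\<leftarrow>M. sc (\<phi> (Sinv a * Sinv (Sinv c))) b)" if \<phi>: "lin_fun sc \<phi>" for \<phi>
  proof (rule lin_fun_separates)
    fix \<chi> assume \<chi>: "lin_fun sc \<chi>"
    have "\<chi> (act \<phi> y) = (\<Sum>(a,b,c)\<leftarrow>M. \<phi> (Sinv a * Sinv (Sinv c)) * \<chi> b)"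
      unfolding lin_actX[OF \<chi>] by (rule M(2)) (intro lin_intros \<chi> lin_fun_comp[OF \<phi>])
    then show "\<chi> (act \<phi> y) = \<chi> (\<Sum>(a,b,c)\<leftarrow>M. sc (\<phi> (Sinv a * Sinv (Sinv c))) b)"
      by (simp add: lin_fun_sum_list_triples[OF \<chi>] lin_fun_scale[OF \<chi>])
  qed
  then show ?thesis using that M(1) by blast
qed

lemma actX_mem: "lin_fun sc \<phi> \<Longrightarrow> y \<in> X \<Longrightarrow> act \<phi> y \<in> X"
  by (erule actX_as_sum) (auto intro!: sum_list_mem X_scale)

lemma lin_HXA: "\<phi> \<in> HXA \<Delta> \<sigma> X A \<Longrightarrow> lin_fun sc \<phi>"
  unfolding HXA_def by (auto intro!: lin_fun_sum_listI simp: split_def lin_fun_const_mult lin_lr)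

lemma lmap_HXA:
  assumes "z \<in> X"
  shows "lmap \<sigma> z \<in> HXA \<Delta> \<sigma> X A"
proof -
  have "lr z 1 h = \<sigma> h z" for h
    using sw2_counit_right[OF lin_fun_sigma_fst, of h z]
    by (simp add: conv_eq_sw2 lmap_def rmap_def sigma_one_left)
  then have "lmap \<sigma> z = (\<lambda>h. \<Sum>(c,x,a)\<leftarrow>[(1, z, 1)]. c * lr x a h)"
    by (simp add: lmap_def)
  then show ?thesis
    unfolding HXA_def using assms one_A by (intro CollectI exI[of _ "[(1, z, 1)]"]) auto
qed

lemma coactX_in_Dset:
  assumes "y \<in> X"
  shows "coact y \<in> Dset sc (HXA \<Delta> \<sigma> X A) X"
proof -
  obtain M where M: "set M \<subseteq> X \<times> X \<times> X"
    "\<And>\<phi>. lin_fun sc \<phi> \<Longrightarrow> act \<phi> y = (\<Sum>(a,b,c)\<leftarrow>M. sc (\<phi> (Sinv a * Sinv (Sinv c))) b)"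
    using actX_as_sum[OF assms] by blast
  define L where "L = map (\<lambda>(a,b,c). (lmap \<sigma> (Sinv a * Sinv (Sinv c)), b)) M"
  have "Dvalid (HXA \<Delta> \<sigma> X A) X L"
    using M(1) by (auto simp: Dvalid_def L_def intro!: lmap_HXA X_mult Sinv_mem)
  moreover have "coact y = evD sc L"
    by (rule ext) (simp add: coactX_eq_actX M(2)[OF lin_fun_sigma_snd] evD_def L_def lmap_def split_def comp_def)
  ultimately show ?thesis unfolding Dset_def by blast
qed

lemma left_YD_X: "left_YD sc \<Delta> \<epsilon> (HXA \<Delta> \<sigma> X A) X act coact"
  unfolding left_YD_def
proof (intro conjI ballI allI)
  fix \<phi> \<psi> assume \<phi>: "\<phi> \<in> HXA \<Delta> \<sigma> X A" and \<psi>: "\<psi> \<in> HXA \<Delta> \<sigma> X A"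
  show "act (conv \<Delta> \<phi> \<psi>) y = act \<phi> (act \<psi> y)" for y
    using actX_conv[OF lin_HXA[OF \<phi>] lin_HXA[OF \<psi>]] .
next
  fix \<phi> assume \<phi>: "\<phi> \<in> HXA \<Delta> \<sigma> X A"
  show "act \<phi> y \<in> X" if "y \<in> X" for y
    using actX_mem[OF lin_HXA[OF \<phi>] that] .
  show "act \<phi> (y + z) = act \<phi> y + act \<phi> z" for y z
    using actX_add[OF lin_HXA[OF \<phi>]] .
  show "act \<phi> (sc c y) = sc c (act \<phi> y)" for c y
    using actX_scale[OF lin_HXA[OF \<phi>]] .
  show "(\<Sum>(h1,h2)\<leftarrow>\<Delta> h. act (\<lambda>w. \<phi> (w * h1)) (coact y h2))
      = (\<Sum>(h1,h2)\<leftarrow>\<Delta> h. coact (act (\<lambda>w. \<phi> (h2 * w)) y) h1)" for y h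
    using actX_coactX_compatible[OF lin_HXA[OF \<phi>]] .
next
  show "act (\<lambda>h. \<phi> h + \<psi> h) y = act \<phi> y + act \<psi> y" for \<phi> \<psi> y
    by (rule actX_fun_add)
  show "act (\<lambda>h. c * \<phi> h) y = sc c (act \<phi> y)" for \<phi> c y
    by (rule actX_fun_scale)
  show "act \<epsilon> y = y" for y
    by (rule actX_counit)
  show "coact y \<in> Dset sc (HXA \<Delta> \<sigma> X A) X" if "y \<in> X" for y
    using coactX_in_Dset[OF that] .
  show "coact (y + z) = (\<lambda>h. coact y h + coact z h)" for y z
    by (rule ext) (simp add: coactX_eq_actX actX_add[OF lin_fun_sigma_snd])
  show "coact (sc c y) = (\<lambda>h. sc c (coact y h))" for c y
    by (rule ext) (simp add: coactX_eq_actX actX_scale[OF lin_fun_sigma_snd])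
  show "coact (coact y h) h' = coact y (h' * h)" for y h h'
    by (simp add: coactX_eq_actX actX_conv[OF lin_fun_sigma_snd lin_fun_sigma_snd, symmetric] conv_sigma)
  show "coact y 1 = y" for y
    by (simp add: coactX_eq_actX sigma_one actX_counit)
qed

lemma theta_in_Bset:
  assumes "x \<in> X"
  shows "\<theta> x \<in> Bset sc \<Delta> \<epsilon> S \<sigma> X A"
proof -
  obtain L where L: "set L \<subseteq> X \<times> X" "\<And>F. bilin sc F \<Longrightarrow> sw2 x F = (\<Sum>(a,b)\<leftarrow>L. F a b)"
    using sw2_subcoalgebra[OF assms] by blast
  have "Dvalid (HXA \<Delta> \<sigma> X A) X (thetaL_rep L)"
    using L(1) by (auto simp: Dvalid_def intro!: lmap_HXA Sinv_mem)
  moreover have "evD sc (thetaL_rep L) = \<theta> x"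
    by (rule evD_thetaL_rep) (rule L(2))
  moreover have "B_lhs sc \<Delta> \<sigma> (inv S) (thetaL_rep L) h h' = B_rhs sc \<epsilon> (thetaL_rep L) h h'" for h h'
    by (rule B_equation_thetaL_rep) (rule L(2))
  ultimately show ?thesis
    unfolding Bset_def by (intro CollectI exI[of _ "thetaL_rep L"]) auto
qed

lemma Bset_subset_theta:
  assumes "d \<in> Bset sc \<Delta> \<epsilon> S \<sigma> X A"
  shows "d \<in> \<theta> ` X"
proof -
  obtain L where L: "d = evD sc L" "Dvalid (HXA \<Delta> \<sigma> X A) X L"
    "\<And>h h'. B_lhs sc \<Delta> \<sigma> (inv S) L h h' = B_rhs sc \<epsilon> L h h'"
    using assms unfolding Bset_def by blast
  have mem: "lin_fun sc m" "y \<in> X" if "(m, y) \<in> set L" for m y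
    using L(2) that by (auto simp: Dvalid_def intro: lin_HXA)
  have "evD sc L 1 \<in> X"
    unfolding evD_def by (rule sum_list_mem) (auto dest: mem intro: X_scale)
  moreover have "evD sc L = \<theta> (evD sc L 1)"
    by (rule B_equation_imp_theta) (use mem L(3) in auto)
  ultimately show ?thesis using L(1) by blast
qed

lemma Bset_eq: "Bset sc \<Delta> \<epsilon> S \<sigma> X A = \<theta> ` X"
  using Bset_subset_theta theta_in_Bset by blast

end

theorem proposition3p2:
  fixes sc :: "'k::field \<Rightarrow> 'h::ring_1 \<Rightarrow> 'h"
    and \<Delta> :: "'h \<Rightarrow> ('h \<times> 'h) list" and \<epsilon> :: "'h \<Rightarrow> 'k" and S :: "'h \<Rightarrow> 'h"
    and \<sigma> :: "'h \<Rightarrow> 'h \<Rightarrow> 'k" and X A :: "'h set"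
  assumes hopf: "hopf_algebra sc \<Delta> \<epsilon> S"
    and Sbij: "bij S"
    and cqt: "cqt sc \<Delta> \<epsilon> \<sigma>"
    and subX: "sub_hopf sc \<Delta> S X"
    and subA: "sub_hopf sc \<Delta> S A"
  shows
    \<comment> \<open>(i)\<close>
    "Bset sc \<Delta> \<epsilon> S \<sigma> X A = theta sc \<Delta> \<sigma> S ` X
     \<and> (\<forall>x\<in>X. \<forall>y\<in>X. theta sc \<Delta> \<sigma> S (x + y) = (\<lambda>h. theta sc \<Delta> \<sigma> S x h + theta sc \<Delta> \<sigma> S y h))
     \<and> (\<forall>c. \<forall>x\<in>X. theta sc \<Delta> \<sigma> S (sc c x) = (\<lambda>h. sc c (theta sc \<Delta> \<sigma> S x h)))
     \<and> inj_on (theta sc \<Delta> \<sigma> S) X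
     \<comment> \<open>(ii): transported action and coaction, and the Yetter-Drinfeld property\<close>
     \<and> (\<forall>x\<in>X. \<forall>a\<in>A. \<forall>y\<in>X.
          evD sc (actB \<Delta> \<sigma> S x a (thetaL \<Delta> \<sigma> (inv S) y))
        = theta sc \<Delta> \<sigma> S (actX sc \<Delta> S (conv \<Delta> (lmap \<sigma> x) (rmap \<sigma> a)) y))
     \<and> (\<forall>y\<in>X. \<forall>h h'. coactB sc \<Delta> \<sigma> S (thetaL \<Delta> \<sigma> (inv S) y) h h'
          = (\<Sum>(y1,y2,y3)\<leftarrow>delta2 \<Delta> y. sc (\<sigma> h (inv S y1 * inv S (inv S y3))) (theta sc \<Delta> \<sigma> S y2 h')))
     \<and> left_YD sc \<Delta> \<epsilon> (HXA \<Delta> \<sigma> X A) X (actX sc \<Delta> S) (coactX sc \<Delta> \<sigma> S)"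
proof -
  interpret cqt_hopf_subalgs sc \<Delta> \<epsilon> S \<sigma> X A
    by unfold_locales (fact hopf Sbij cqt subX subA)+
  have "inj_on \<theta> X"
    using inj_theta by (rule inj_on_subset) simp
  then show ?thesis
    using Bset_eq theta_add theta_scale actB_theta coactB_theta left_YD_X by (auto intro!: ext)
qed

end
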